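(* Let $A$ be a $k$-algebra with a $k$-linear automorphism $\theta$ and a $k$-linear left $\theta$-derivation $\delta$, and let $A^\theta$ be the subalgebra of $\theta$-fixed elements. Assume there is a positive integer $d$ such that $\theta^d=\mathrm{id}_A$ and $\sum_{w\in W_i^d}w_{\theta,\delta}=0$ for all $0\le i<d$, and assume $A$ is finite over the subring $A^\theta\cap\ker\delta$ (finitely generated as both a left and a right module). Then the finite dual of the Ore extension $A[t;\theta,\delta]$ is isomorphic as a coalgebra to a cotwisted tensor product \[A[t;\theta,\delta]^\circ\cong A^\circ\otimes^\phi\mathrm{Dist}(\mathbb A^1_k)\] for a suitable cotwisting map $\phi$.
   Context: $k$ is a field. A left $\theta$-derivation is a linear map with $\delta(ab)=\theta(a)\delta(b)+\delta(a)b$. The Ore extension $A[t;\theta,\delta]$ is the algebra that is free as a left $A$-module with basis $\{t^n\}_{n\ge0}$ and multiplication determined by $ta=\theta(a)t+\delta(a)$ for $a\in A$. In the free monoid on two letters $u,v$, $W_i^m$ is the set of words of length $m$ containing exactly $i$ occurrences of $u$; for a word $w$, $w_{\theta,\delta}\in\mathrm{End}_k(A)$ is obtained by substituting $u\mapsto\theta$, $v\mapsto\delta$ and composing. For an algebra $R$, $R^\circ$ is the finite dual coalgebra: functionals $\phi\in R^*$ whose kernel contains a two-sided ideal of finite codimension, with comultiplication induced by the dual of multiplication and counit $\phi\mapsto\phi(1)$. $\mathrm{Dist}(\mathbb A^1_k)$ is the coalgebra of distributions on the affine line, $\varinjlim_S\Gamma(S,\mathcal O_S)^*$ over closed subschemes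 $S$ of $\mathbb A^1_k$ finite over $k$; it is isomorphic to $k[t]^\circ$. For coalgebras $C,D$, a linear map $\phi\colon C\otimes D\to D\otimes C$ is a cotwisting map if $\Delta_\phi=(\mathrm{id}_C\otimes\phi\otimes\mathrm{id}_D)\circ(\Delta_C\otimes\Delta_D)$ is coassociative on $C\otimes D$ with counit $\varepsilon_C\otimes\varepsilon_D$; $C\otimes^\phi D$ denotes the resulting coalgebra. *)

theory Defs
  imports "HOL-Computational_Algebra.Polynomial"
begin

text \<open>A (unital) k-algebra structure on a ring 'a: a ring homomorphism
  iota from the field 'k into the centre of 'a.  Scalar multiplication is
  c . a = iota c * a.\<close>
definition k_algebra :: "('k::field \<Rightarrow> 'a::ring_1) \<Rightarrow> bool" where
  "k_algebra \<iota> \<longleftrightarrow> \<iota> 1 = 1 \<and> (\<forall>x y. \<iota> (x + y) = \<iota> x + \<iota> y)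
     \<and> (\<forall>x y. \<iota> (x * y) = \<iota> x * \<iota> y) \<and> (\<forall>c a. \<iota> c * a = a * \<iota> c)"

definition k_linear :: "('k::field \<Rightarrow> 'a::ring_1) \<Rightarrow> ('a \<Rightarrow> 'a) \<Rightarrow> bool" where
  "k_linear \<iota> f \<longleftrightarrow> (\<forall>a b. f (a + b) = f a + f b) \<and> (\<forall>c a. f (\<iota> c * a) = \<iota> c * f a)"

text \<open>Words in u (True) and v (False) of length m with exactly i occurrences of u,
  and the substitution u := theta, v := delta followed by composition.\<close>
definition words :: "nat \<Rightarrow> nat \<Rightarrow> bool list set" where
  "words i m = {w. length w = m \<and> length (filter id w) = i}"

definition word_op :: "('a \<Rightarrow> 'a) \<Rightarrow> ('a \<Rightarrow> 'a) \<Rightarrow> bool list \<Rightarrow> 'a \<Rightarrow> 'a" where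
  "word_op \<theta> \<delta> w = foldr (\<lambda>b f. (if b then \<theta> else \<delta>) \<circ> f) w id"

definition fin_gen_left :: "'a::ring_1 set \<Rightarrow> bool" where
  "fin_gen_left B \<longleftrightarrow> (\<exists>S. finite S \<and> (\<forall>a. \<exists>b. (\<forall>s\<in>S. b s \<in> B) \<and> a = (\<Sum>s\<in>S. b s * s)))"

definition fin_gen_right :: "'a::ring_1 set \<Rightarrow> bool" where
  "fin_gen_right B \<longleftrightarrow> (\<exists>S. finite S \<and> (\<forall>a. \<exists>b. (\<forall>s\<in>S. b s \<in> B) \<and> a = (\<Sum>s\<in>S. s * b s)))"

text \<open>Elements are represented by their (left) coefficient polynomials
  sum a_i t^i.  Left multiplication by t: t (sum a_i t^i) = sum (theta a_i t^(i+1) + delta a_i t^i).\<close>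
definition tmul :: "('a::ring_1 \<Rightarrow> 'a) \<Rightarrow> ('a \<Rightarrow> 'a) \<Rightarrow> 'a poly \<Rightarrow> 'a poly" where
  "tmul \<theta> \<delta> p = pCons 0 (map_poly \<theta> p) + map_poly \<delta> p"

text \<open>(sum a_i t^i)(sum b_j t^j) = sum a_i (t^i b_j) t^j.\<close>
definition ore_mult :: "('a::ring_1 \<Rightarrow> 'a) \<Rightarrow> ('a \<Rightarrow> 'a) \<Rightarrow> 'a poly \<Rightarrow> 'a poly \<Rightarrow> 'a poly" where
  "ore_mult \<theta> \<delta> p q = (\<Sum>i\<le>degree p. \<Sum>j\<le>degree q.
      map_poly ((*) (coeff p i)) ((pCons 0 ^^ j) ((tmul \<theta> \<delta> ^^ i) [:coeff q j:])))"

definition ore_scal :: "('k \<Rightarrow> 'a::ring_1) \<Rightarrow> 'k \<Rightarrow> 'a poly \<Rightarrow> 'a poly" where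
  "ore_scal \<iota> c p = map_poly (\<lambda>x. \<iota> c * x) p"

definition alg_ideal :: "('r::ab_group_add \<Rightarrow> 'r \<Rightarrow> 'r) \<Rightarrow> ('k \<Rightarrow> 'r \<Rightarrow> 'r) \<Rightarrow> 'r set \<Rightarrow> bool" where
  "alg_ideal mul scal I \<longleftrightarrow> 0 \<in> I \<and> (\<forall>x\<in>I. \<forall>y\<in>I. x + y \<in> I) \<and> (\<forall>x\<in>I. - x \<in> I)
     \<and> (\<forall>x\<in>I. \<forall>c. scal c x \<in> I) \<and> (\<forall>x\<in>I. \<forall>r. mul r x \<in> I \<and> mul x r \<in> I)"

definition fin_codim :: "('k \<Rightarrow> 'r::ab_group_add \<Rightarrow> 'r) \<Rightarrow> 'r set \<Rightarrow> bool" where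
  "fin_codim scal I \<longleftrightarrow> (\<exists>F. finite F \<and> (\<forall>x. \<exists>c. x - (\<Sum>f\<in>F. scal (c f) f) \<in> I))"

definition finite_dual :: "('r::ab_group_add \<Rightarrow> 'r \<Rightarrow> 'r) \<Rightarrow> ('k::field \<Rightarrow> 'r \<Rightarrow> 'r) \<Rightarrow> ('r \<Rightarrow> 'k) set" where
  "finite_dual mul scal = {\<psi>. (\<forall>x y. \<psi> (x + y) = \<psi> x + \<psi> y) \<and> (\<forall>c x. \<psi> (scal c x) = c * \<psi> x)
      \<and> (\<exists>I. alg_ideal mul scal I \<and> fin_codim scal I \<and> (\<forall>x\<in>I. \<psi> x = 0))}"

text \<open>For subspaces C of functions X -> k and D of functions Y -> k, the tensor
  product C (x) D is (canonically and injectively) realised as the span of the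
  functions (x,y) |-> c x * d y inside the functions X x Y -> k.\<close>
definition tensor_span :: "('x \<Rightarrow> 'k::field) set \<Rightarrow> ('y \<Rightarrow> 'k) set \<Rightarrow> ('x \<times> 'y \<Rightarrow> 'k) set" where
  "tensor_span C D = {T. \<exists>(n::nat) c d. (\<forall>i<n. c i \<in> C \<and> d i \<in> D) \<and> T = (\<lambda>(x, y). \<Sum>i<n. c i x * d i y)}"

definition linear_on :: "('x \<Rightarrow> 'k::field) set \<Rightarrow> (('x \<Rightarrow> 'k) \<Rightarrow> ('y \<Rightarrow> 'k)) \<Rightarrow> bool" where
  "linear_on V f \<longleftrightarrow> (\<forall>u\<in>V. \<forall>v\<in>V. f (\<lambda>z. u z + v z) = (\<lambda>z. f u z + f v z))
     \<and> (\<forall>u\<in>V. \<forall>c. f (\<lambda>z. c * u z) = (\<lambda>z. c * f u z))"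

definition tensor_map :: "(('r \<Rightarrow> 'k) \<Rightarrow> ('u \<Rightarrow> 'k)) \<Rightarrow> (('s \<Rightarrow> 'k) \<Rightarrow> ('v \<Rightarrow> 'k))
     \<Rightarrow> ('r \<times> 's \<Rightarrow> 'k::field) \<Rightarrow> ('u \<times> 'v \<Rightarrow> 'k)" where
  "tensor_map f g G = (\<lambda>(u, v). f (\<lambda>x. g (\<lambda>y. G (x, y)) v) u)"

text \<open>C = R_1 finite dual, D = R_2 finite dual, with comultiplications
  Delta c (x,y) = c (x y).  Then
  Delta_phi = (id (x) phi (x) id) o (Delta_C (x) Delta_D) is given by
  Delta_phi T ((a,q),(a',p')) = phi ((x,y) |-> T (a x, y p')) (q, a').\<close>
definition delta_phi :: "('x \<Rightarrow> 'x \<Rightarrow> 'x) \<Rightarrow> ('y \<Rightarrow> 'y \<Rightarrow> 'y)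
     \<Rightarrow> (('x \<times> 'y \<Rightarrow> 'k) \<Rightarrow> ('y \<times> 'x \<Rightarrow> 'k)) \<Rightarrow> ('x \<times> 'y \<Rightarrow> 'k) \<Rightarrow> (('x \<times> 'y) \<times> ('x \<times> 'y) \<Rightarrow> 'k)" where
  "delta_phi mX mY \<phi> T = (\<lambda>((a, q), (a', p')). \<phi> (\<lambda>(x, y). T (mX a x, mY y p')) (q, a'))"

definition cotwisting :: "('x \<Rightarrow> 'k::field) set \<Rightarrow> ('y \<Rightarrow> 'k) set \<Rightarrow> ('x \<Rightarrow> 'x \<Rightarrow> 'x) \<Rightarrow> 'x
     \<Rightarrow> ('y \<Rightarrow> 'y \<Rightarrow> 'y) \<Rightarrow> 'y \<Rightarrow> (('x \<times> 'y \<Rightarrow> 'k) \<Rightarrow> ('y \<times> 'x \<Rightarrow> 'k)) \<Rightarrow> bool" where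
  "cotwisting C D mX oX mY oY \<phi> \<longleftrightarrow>
     linear_on (tensor_span C D) \<phi> \<and> \<phi> ` tensor_span C D \<subseteq> tensor_span D C \<and>
     (\<forall>T\<in>tensor_span C D.
        delta_phi mX mY \<phi> T \<in> tensor_span (tensor_span C D) (tensor_span C D)
      \<and> (\<forall>u v w. delta_phi mX mY \<phi> (\<lambda>z. delta_phi mX mY \<phi> T (z, w)) (u, v)
               = delta_phi mX mY \<phi> (\<lambda>z. delta_phi mX mY \<phi> T (u, z)) (v, w))
      \<and> (\<forall>w. delta_phi mX mY \<phi> T ((oX, oY), w) = T w)
      \<and> (\<forall>u. delta_phi mX mY \<phi> T (u, (oX, oY)) = T u))"

definition coalg_iso_twisted :: "('r \<Rightarrow> 'k::field) set \<Rightarrow> ('r \<Rightarrow> 'r \<Rightarrow> 'r) \<Rightarrow> 'r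
     \<Rightarrow> ('x \<Rightarrow> 'k) set \<Rightarrow> ('y \<Rightarrow> 'k) set \<Rightarrow> ('x \<Rightarrow> 'x \<Rightarrow> 'x) \<Rightarrow> 'x
     \<Rightarrow> ('y \<Rightarrow> 'y \<Rightarrow> 'y) \<Rightarrow> 'y \<Rightarrow> (('x \<times> 'y \<Rightarrow> 'k) \<Rightarrow> ('y \<times> 'x \<Rightarrow> 'k))
     \<Rightarrow> (('r \<Rightarrow> 'k) \<Rightarrow> ('x \<times> 'y \<Rightarrow> 'k)) \<Rightarrow> bool" where
  "coalg_iso_twisted R mR oR C D mX oX mY oY \<phi> f \<longleftrightarrow>
     bij_betw f R (tensor_span C D) \<and> linear_on R f
   \<and> (\<forall>\<psi>\<in>R. f \<psi> (oX, oY) = \<psi> oR)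
   \<and> (\<forall>\<psi>\<in>R. delta_phi mX mY \<phi> (f \<psi>) = tensor_map f f (\<lambda>(x, y). \<psi> (mR x y)))"

end

theory Submission
  imports Defs
begin

text \<open>
  Write R for A[t;\<theta>,\<delta>]. As R is free over A on the powers of t, the map sending
  \<psi> \<in> R\<degree> to (a, q) \<mapsto> \<psi>(a q(t)) is injective, and it lands in
  A\<degree> \<otimes> k[t]\<degree> because (x, y) \<mapsto> \<psi>(x y) has finite rank.

  Surjectivity carries the content. Together with \<theta>^d = id, the word condition says exactly that
  t^d commutes with A, so every polynomial in t^d is central in R. Given c \<in> A\<degree> and
  e \<in> k[t]\<degree>, e vanishes on the multiples of a monic m(t^d) and c on an ideal J of A.
  The largest two-sided ideal of R on which \<Sum> a_j t^j \<mapsto> \<Sum> c(a_j) e(t^j) vanishes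
  contains m(t^d) and every monomial b s t^j with b \<in> B \<inter> J, where B = A^\<theta> \<inter> ker \<delta>.
  Division by the monic central element m(t^d), finiteness of A over B, and finite codimension
  of B \<inter> J in B show that this ideal has finite codimension.

  The cotwisting map is the comultiplication of R\<degree> transported along the resulting bijection.
\<close>

section \<open>Finite codimension and linear functionals\<close>

text \<open>A copy of \<^locale>\<open>vector_space\<close>: that locale is interpreted globally for real vector spaces,
  and abbreviations declared in its context would be captured by that interpretation.\<close>

locale kspace = vector_space scale
  for scale :: "'k::field \<Rightarrow> 'v::ab_group_add \<Rightarrow> 'v" (infixr "*s" 75)

sublocale kspace \<subseteq> functionals: vector_space_pair scale "(*) :: 'k \<Rightarrow> 'k \<Rightarrow> 'k"
  by unfold_locales (simp_all add: algebra_simps)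

context kspace
begin

abbreviation linear_functional :: "('v \<Rightarrow> 'k) \<Rightarrow> bool" where
  "linear_functional f \<equiv> Vector_Spaces.linear scale (*) f"

lemma linear_functional_iff:
  "linear_functional f \<longleftrightarrow> (\<forall>x y. f (x + y) = f x + f y) \<and> (\<forall>c x. f (c *s x) = c * f x)"
  unfolding Vector_Spaces.linear_iff using vector_space_axioms functionals.vs2.vector_space_axioms by blast

lemma fin_codim_iff_span:
  "fin_codim scale I \<longleftrightarrow> (\<exists>F. finite F \<and> (\<forall>x. \<exists>y\<in>span F. x - y \<in> I))"
  unfolding fin_codim_def by (auto simp: span_finite)

lemma kernels_finite_codim_in:
  assumes V: "subspace V" and G: "finite G"
    and lin: "\<And>g. g \<in> G \<Longrightarrow> linear_functional (\<alpha> g)"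
  shows "\<exists>H. finite H \<and> H \<subseteq> V \<and> (\<forall>x\<in>V. \<exists>y\<in>span H. \<forall>g\<in>G. \<alpha> g (x - y) = 0)"
  using G lin
proof (induction G rule: finite_induct)
  case empty
  show ?case by (intro exI[of _ "{}"]) simp
next
  case (insert g G)
  then obtain H where H: "finite H" "H \<subseteq> V"
    and reduce: "\<And>x. x \<in> V \<Longrightarrow> \<exists>y\<in>span H. \<forall>g'\<in>G. \<alpha> g' (x - y) = 0" by auto
  have lin_g: "linear_functional (\<alpha> g')" if "g' \<in> insert g G" for g'
    using insert.prems that by blast
  show ?case
  proof (cases "\<exists>k\<in>V. (\<forall>g'\<in>G. \<alpha> g' k = 0) \<and> \<alpha> g k \<noteq> 0")
    case False
    show ?thesis
    proof (intro exI[of _ H] conjI ballI)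
      fix x assume x: "x \<in> V"
      obtain y where y: "y \<in> span H" "\<forall>g'\<in>G. \<alpha> g' (x - y) = 0" using reduce[OF x] by blast
      have "y \<in> V" using span_minimal[OF H(2) V] y(1) by blast
      then have "x - y \<in> V" by (rule subspace_diff[OF V x])
      then have "\<alpha> g (x - y) = 0" using False y(2) by blast
      with y show "\<exists>y\<in>span H. \<forall>g'\<in>insert g G. \<alpha> g' (x - y) = 0" by auto
    qed (use H in auto)
  next
    case True
    then obtain k where k: "k \<in> V" "\<forall>g'\<in>G. \<alpha> g' k = 0" "\<alpha> g k \<noteq> 0" by blast
    show ?thesis
    proof (intro exI[of _ "insert k H"] conjI ballI)
      fix x assume x: "x \<in> V"
      obtain y where y: "y \<in> span H" "\<forall>g'\<in>G. \<alpha> g' (x - y) = 0" using reduce[OF x] by blast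
      define l where "l = \<alpha> g (x - y) / \<alpha> g k"
      have in_span: "y + l *s k \<in> span (insert k H)"
        using y(1) span_mono[of H "insert k H"] by (blast intro: span_add span_scale span_base)
      have "\<alpha> g' (x - (y + l *s k)) = \<alpha> g' (x - y) - l * \<alpha> g' k" if "g' \<in> insert g G" for g'
        using functionals.linear_diff[OF lin_g[OF that]] functionals.linear_scale[OF lin_g[OF that]]
        by (simp add: diff_diff_add[symmetric])
      then have "\<forall>g'\<in>insert g G. \<alpha> g' (x - (y + l *s k)) = 0"
        using y(2) k(2,3) by (simp add: l_def)
      with in_span show "\<exists>y\<in>span (insert k H). \<forall>g'\<in>insert g G. \<alpha> g' (x - y) = 0" by blast
    qed (use H k(1) in auto)
  qed
qed

corollary fin_codim_kernels:
  assumes "finite G" "\<And>g. g \<in> G \<Longrightarrow> linear_functional (\<alpha> g)"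
  shows "fin_codim scale {x. \<forall>g\<in>G. \<alpha> g x = 0}"
proof -
  have "\<exists>H. finite H \<and> H \<subseteq> UNIV \<and> (\<forall>x\<in>UNIV. \<exists>y\<in>span H. \<forall>g\<in>G. \<alpha> g (x - y) = 0)"
    using assms by (intro kernels_finite_codim_in) auto
  then obtain H where "finite H" and "\<forall>x\<in>UNIV. \<exists>y\<in>span H. \<forall>g\<in>G. \<alpha> g (x - y) = 0"
    by blast
  then show ?thesis unfolding fin_codim_iff_span by (intro exI[of _ H]) simp
qed

lemma fin_codim_independent_complement:
  assumes I: "subspace I" and fin: "fin_codim scale I"
  obtains G where "finite G" "\<And>x. \<exists>c. x - (\<Sum>g\<in>G. c g *s g) \<in> I"
    "\<And>c. (\<Sum>g\<in>G. c g *s g) \<in> I \<Longrightarrow> \<forall>g\<in>G. c g = 0"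
proof -
  define spanning where "spanning G \<longleftrightarrow> finite G \<and> (\<forall>x. \<exists>c. x - (\<Sum>g\<in>G. c g *s g) \<in> I)" for G
  obtain F where "spanning F" using fin unfolding fin_codim_def spanning_def by blast
  then obtain G where G: "spanning G" and min: "\<And>G'. spanning G' \<Longrightarrow> card G \<le> card G'"
    using ex_has_least_nat[of spanning F card] by blast
  have "\<forall>g\<in>G. c g = 0" if c: "(\<Sum>g\<in>G. c g *s g) \<in> I" for c
  proof (rule ccontr)
    assume "\<not> (\<forall>g\<in>G. c g = 0)"
    then obtain g0 where g0: "g0 \<in> G" "c g0 \<noteq> 0" by blast
    have "\<exists>e'. x - (\<Sum>g\<in>G - {g0}. e' g *s g) \<in> I" for x
    proof -
      obtain e where e: "x - (\<Sum>g\<in>G. e g *s g) \<in> I" using G unfolding spanning_def by blast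
      define l where "l = e g0 / c g0"
      define e' where "e' g = e g - l * c g" for g
      have "(\<Sum>g\<in>G - {g0}. e' g *s g) = (\<Sum>g\<in>G. e' g *s g)"
        using G g0 by (simp add: spanning_def sum.remove e'_def l_def)
      also have "\<dots> = (\<Sum>g\<in>G. e g *s g) - l *s (\<Sum>g\<in>G. c g *s g)"
        by (simp add: e'_def scale_left_diff_distrib sum_subtractf scale_sum_right)
      finally have "x - (\<Sum>g\<in>G - {g0}. e' g *s g) = (x - (\<Sum>g\<in>G. e g *s g)) + l *s (\<Sum>g\<in>G. c g *s g)"
        by simp
      also have "\<dots> \<in> I" using e c I by (simp add: subspace_add subspace_scale)
      finally show ?thesis by blast
    qed
    then have "card G \<le> card (G - {g0})" using G by (intro min) (simp add: spanning_def)
    then show False using G g0 card_Diff1_less[of G g0] by (simp add: spanning_def)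
  qed
  then show ?thesis using that G unfolding spanning_def by blast
qed

lemma fin_codim_imp_kernels:
  assumes I: "subspace I" and fin: "fin_codim scale I"
  obtains G \<alpha> where "finite G" "\<And>g. g \<in> G \<Longrightarrow> linear_functional (\<alpha> g)"
    "\<And>x. x - (\<Sum>g\<in>G. \<alpha> g x *s g) \<in> I" "I = {x. \<forall>g\<in>G. \<alpha> g x = 0}"
proof -
  obtain G where G: "finite G" and spans: "\<And>x. \<exists>c. x - (\<Sum>g\<in>G. c g *s g) \<in> I"
    and indep: "\<And>c. (\<Sum>g\<in>G. c g *s g) \<in> I \<Longrightarrow> \<forall>g\<in>G. c g = 0"
    using fin_codim_independent_complement[OF I fin] by blast
  define coord where "coord g x = (SOME c. x - (\<Sum>g\<in>G. c g *s g) \<in> I) g" for g x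
  have coord: "x - (\<Sum>g\<in>G. coord g x *s g) \<in> I" for x
    unfolding coord_def by (rule someI_ex[OF spans[of x]])
  have coord_eqI: "coord g x = c g" if "x - (\<Sum>g\<in>G. c g *s g) \<in> I" "g \<in> G" for x c g
  proof -
    have "(x - (\<Sum>g\<in>G. c g *s g)) - (x - (\<Sum>g\<in>G. coord g x *s g)) \<in> I"
      using I that(1) coord by (rule subspace_diff)
    then have "(\<Sum>g\<in>G. (coord g x - c g) *s g) \<in> I"
      by (simp add: scale_left_diff_distrib sum_subtractf)
    from indep[OF this] that(2) show ?thesis by simp
  qed
  have linear_coord: "linear_functional (coord g)" if g: "g \<in> G" for g
    unfolding linear_functional_iff
  proof (intro conjI allI)
    fix x y
    have "(x + y) - (\<Sum>g\<in>G. (coord g x + coord g y) *s g)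
        = (x - (\<Sum>g\<in>G. coord g x *s g)) + (y - (\<Sum>g\<in>G. coord g y *s g))"
      by (simp add: scale_left_distrib sum.distrib)
    also have "\<dots> \<in> I" using I coord coord by (rule subspace_add)
    finally show "coord g (x + y) = coord g x + coord g y"
      by (rule coord_eqI[of "x + y" "\<lambda>g. coord g x + coord g y", OF _ g])
  next
    fix a x
    have "a *s x - (\<Sum>g\<in>G. (a * coord g x) *s g) = a *s (x - (\<Sum>g\<in>G. coord g x *s g))"
      by (simp add: scale_right_diff_distrib scale_sum_right)
    also have "\<dots> \<in> I" using I coord by (rule subspace_scale)
    finally show "coord g (a *s x) = a * coord g x"
      by (rule coord_eqI[of "a *s x" "\<lambda>g. a * coord g x", OF _ g])
  qed
  have kernel: "I = {x. \<forall>g\<in>G. coord g x = 0}"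
  proof (intro set_eqI iffI)
    fix x assume "x \<in> I"
    then have "x - (\<Sum>g\<in>G. 0 *s g) \<in> I" by simp
    then show "x \<in> {x. \<forall>g\<in>G. coord g x = 0}" using coord_eqI[of x "\<lambda>_. 0"] by simp
  next
    fix x assume "x \<in> {x. \<forall>g\<in>G. coord g x = 0}"
    then show "x \<in> I" using coord[of x] by simp
  qed
  show ?thesis by (rule that[OF G linear_coord coord kernel])
qed

section \<open>Finite duals of algebras\<close>

lemma finite_dual_iff:
  "\<psi> \<in> finite_dual m scale \<longleftrightarrow>
     linear_functional \<psi> \<and> (\<exists>I. alg_ideal m scale I \<and> fin_codim scale I \<and> (\<forall>x\<in>I. \<psi> x = 0))"
  unfolding finite_dual_def linear_functional_iff by blast

lemma finite_dual_intro:
  "linear_functional \<psi> \<Longrightarrow> alg_ideal m scale I \<Longrightarrow> fin_codim scale I \<Longrightarrow> \<forall>x\<in>I. \<psi> x = 0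
    \<Longrightarrow> \<psi> \<in> finite_dual m scale"
  unfolding finite_dual_iff by blast

lemma alg_ideal_subspace: "alg_ideal m scale I \<Longrightarrow> subspace I"
  unfolding alg_ideal_def subspace_def by blast

end

locale unital_algebra = kspace scale
  for scale :: "'k::field \<Rightarrow> 'r::ab_group_add \<Rightarrow> 'r" (infixr "*s" 75) +
  fixes mul :: "'r \<Rightarrow> 'r \<Rightarrow> 'r" and one :: 'r
  assumes mul_add_left: "mul (x + y) z = mul x z + mul y z"
    and mul_add_right: "mul x (y + z) = mul x y + mul x z"
    and mul_scale_left: "mul (c *s x) y = c *s mul x y"
    and mul_scale_right: "mul x (c *s y) = c *s mul x y"
    and mul_assoc: "mul (mul x y) z = mul x (mul y z)"
    and mul_one_left: "mul one x = x"
    and mul_one_right: "mul x one = x"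
begin

abbreviation fdual :: "('r \<Rightarrow> 'k) set" where
  "fdual \<equiv> finite_dual mul scale"

lemma additive_mul_left: "additive (\<lambda>x. mul x z)"
  by unfold_locales (rule mul_add_left)

lemma additive_mul_right: "additive (mul z)"
  by unfold_locales (rule mul_add_right)

lemmas mul_zero_left = additive.zero[OF additive_mul_left]
  and mul_zero_right = additive.zero[OF additive_mul_right]
  and mul_minus_left = additive.minus[OF additive_mul_left]
  and mul_minus_right = additive.minus[OF additive_mul_right]
  and mul_diff_left = additive.diff[OF additive_mul_left]
  and mul_diff_right = additive.diff[OF additive_mul_right]
  and mul_sum_left = additive.sum[OF additive_mul_left]
  and mul_sum_right = additive.sum[OF additive_mul_right]

lemma alg_ideal_mul: "alg_ideal mul scale I \<Longrightarrow> x \<in> I \<Longrightarrow> mul r x \<in> I \<and> mul x r \<in> I"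
  unfolding alg_ideal_def by blast

lemma finite_dual_linear: "\<psi> \<in> fdual \<Longrightarrow> linear_functional \<psi>"
  by (simp add: finite_dual_iff)

lemma finite_dual_kernels:
  assumes "\<psi> \<in> fdual"
  obtains I G \<alpha> where "alg_ideal mul scale I" "\<forall>x\<in>I. \<psi> x = 0" "finite G"
    "\<And>g. g \<in> G \<Longrightarrow> linear_functional (\<alpha> g)" "\<And>x. x - (\<Sum>g\<in>G. \<alpha> g x *s g) \<in> I"
    "I = {x. \<forall>g\<in>G. \<alpha> g x = 0}"
proof -
  obtain I where I: "alg_ideal mul scale I" "fin_codim scale I" "\<forall>x\<in>I. \<psi> x = 0"
    using assms by (auto simp: finite_dual_iff)
  show ?thesis
  proof (rule fin_codim_imp_kernels[OF alg_ideal_subspace[OF I(1)] I(2)])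
    fix G \<alpha> assume "finite G" "\<And>g. g \<in> G \<Longrightarrow> linear_functional (\<alpha> g)"
      "\<And>x. x - (\<Sum>g\<in>G. \<alpha> g x *s g) \<in> I" "I = {x. \<forall>g\<in>G. \<alpha> g x = 0}"
    then show thesis by (rule that[OF I(1) I(3)])
  qed
qed

lemma finite_dual_zero: "(\<lambda>x. 0) \<in> fdual"
proof -
  have "linear_functional (\<lambda>x. 0)" unfolding linear_functional_iff by simp
  moreover have "alg_ideal mul scale UNIV" by (simp add: alg_ideal_def)
  moreover have "fin_codim scale UNIV" unfolding fin_codim_def by (intro exI[of _ "{}"]) simp
  ultimately show ?thesis by (rule finite_dual_intro) simp
qed

lemma finite_dual_scale:
  assumes "\<psi> \<in> fdual"
  shows "(\<lambda>x. c * \<psi> x) \<in> fdual"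
proof -
  obtain I where I: "alg_ideal mul scale I" "fin_codim scale I" "\<forall>x\<in>I. \<psi> x = 0"
    using assms by (auto simp: finite_dual_iff)
  have "linear_functional (\<lambda>x. c * \<psi> x)"
    by (rule functionals.linear_compose_scale_right[OF finite_dual_linear[OF assms]])
  then show ?thesis by (rule finite_dual_intro[OF _ I(1,2)]) (use I(3) in simp)
qed

lemma finite_dual_add:
  assumes "\<psi>1 \<in> fdual" "\<psi>2 \<in> fdual"
  shows "(\<lambda>x. \<psi>1 x + \<psi>2 x) \<in> fdual"
proof -
  obtain I1 G1 \<alpha>1 where I1: "alg_ideal mul scale I1" "\<forall>x\<in>I1. \<psi>1 x = 0" "finite G1"
    "\<And>g. g \<in> G1 \<Longrightarrow> linear_functional (\<alpha>1 g)" "\<And>x. x - (\<Sum>g\<in>G1. \<alpha>1 g x *s g) \<in> I1"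
    "I1 = {x. \<forall>g\<in>G1. \<alpha>1 g x = 0}"
    using finite_dual_kernels[OF assms(1)] by blast
  obtain I2 G2 \<alpha>2 where I2: "alg_ideal mul scale I2" "\<forall>x\<in>I2. \<psi>2 x = 0" "finite G2"
    "\<And>g. g \<in> G2 \<Longrightarrow> linear_functional (\<alpha>2 g)" "\<And>x. x - (\<Sum>g\<in>G2. \<alpha>2 g x *s g) \<in> I2"
    "I2 = {x. \<forall>g\<in>G2. \<alpha>2 g x = 0}"
    using finite_dual_kernels[OF assms(2)] by blast
  define \<beta> where "\<beta> = case_sum \<alpha>1 \<alpha>2"
  have "I1 \<inter> I2 = {x. \<forall>g\<in>Inl ` G1 \<union> Inr ` G2. \<beta> g x = 0}"
    unfolding I1(6) I2(6) \<beta>_def by (auto simp: ball_Un)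
  moreover have "fin_codim scale {x. \<forall>g\<in>Inl ` G1 \<union> Inr ` G2. \<beta> g x = 0}"
    using I1(3,4) I2(3,4) by (intro fin_codim_kernels) (auto simp: \<beta>_def)
  ultimately have codim: "fin_codim scale (I1 \<inter> I2)" by simp
  have ideal: "alg_ideal mul scale (I1 \<inter> I2)"
    using I1(1) I2(1) unfolding alg_ideal_def by blast
  have lin: "linear_functional (\<lambda>x. \<psi>1 x + \<psi>2 x)"
    using finite_dual_linear[OF assms(1)] finite_dual_linear[OF assms(2)]
    by (rule functionals.linear_compose_add)
  show ?thesis by (rule finite_dual_intro[OF lin ideal codim]) (use I1(2) I2(2) in simp)
qed

lemma finite_dual_sum: "(\<And>i. i \<in> S \<Longrightarrow> \<psi> i \<in> fdual) \<Longrightarrow> (\<lambda>x. \<Sum>i\<in>S. \<psi> i x) \<in> fdual"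
  by (induction S rule: infinite_finite_induct) (simp_all add: finite_dual_zero finite_dual_add)

lemma finite_dual_translate:
  assumes "\<psi> \<in> fdual"
  shows "(\<lambda>x. \<psi> (mul (mul a x) b)) \<in> fdual"
proof -
  obtain I where I: "alg_ideal mul scale I" "fin_codim scale I" "\<forall>x\<in>I. \<psi> x = 0"
    using assms by (auto simp: finite_dual_iff)
  have "linear_functional (\<lambda>x. \<psi> (mul (mul a x) b))"
    using finite_dual_linear[OF assms] unfolding linear_functional_iff
    by (simp add: mul_add_left mul_add_right mul_scale_left mul_scale_right)
  then show ?thesis
    by (rule finite_dual_intro[OF _ I(1,2)]) (use I(1,3) alg_ideal_mul in blast)
qed

lemma alg_ideal_kernel:
  assumes "linear_functional \<psi>"
  shows "alg_ideal mul scale {x. \<forall>u v. \<psi> (mul (mul u x) v) = 0}"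
  using functionals.linear_add[OF assms] functionals.linear_scale[OF assms]
    functionals.linear_neg[OF assms] functionals.linear_0[OF assms]
  unfolding alg_ideal_def
  by (simp add: mul_add_left mul_add_right mul_scale_left mul_scale_right mul_zero_left
      mul_zero_right mul_minus_left mul_minus_right) (metis mul_assoc)

lemma finite_dual_if_kernel_fin_codim:
  assumes "linear_functional \<psi>" "fin_codim scale {x. \<forall>u v. \<psi> (mul (mul u x) v) = 0}"
  shows "\<psi> \<in> fdual"
proof -
  have "\<psi> x = 0" if "x \<in> {x. \<forall>u v. \<psi> (mul (mul u x) v) = 0}" for x
  proof -
    from that have "\<psi> (mul (mul one x) one) = 0" by simp
    then show ?thesis by (simp add: mul_one_left mul_one_right)
  qed
  then show ?thesis by (intro finite_dual_intro[OF assms(1) alg_ideal_kernel[OF assms(1)] assms(2)]) simp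
qed

lemma coordinate_in_finite_dual:
  assumes I: "alg_ideal mul scale I" "finite G" "\<And>x. x - (\<Sum>g\<in>G. \<alpha> g x *s g) \<in> I"
    and lin: "linear_functional (\<alpha> g)" and kernel: "I = {x. \<forall>g\<in>G. \<alpha> g x = 0}" and g: "g \<in> G"
  shows "\<alpha> g \<in> fdual"
proof (rule finite_dual_intro[OF lin I(1)])
  show "fin_codim scale I"
    unfolding fin_codim_def
  proof (intro exI[of _ G] conjI allI)
    fix x show "\<exists>c. x - (\<Sum>g\<in>G. c g *s g) \<in> I" by (rule exI[of _ "\<lambda>g. \<alpha> g x"]) (rule I(3))
  qed (rule I(2))
  show "\<forall>x\<in>I. \<alpha> g x = 0" using g unfolding kernel by simp
qed

lemma finite_dual_mult_eq_sum:
  assumes I: "alg_ideal mul scale I" "\<forall>x\<in>I. \<psi> x = 0" and lin: "linear_functional \<psi>"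
    and coords: "\<And>x. x - (\<Sum>g\<in>G. \<alpha> g x *s g) \<in> I"
  shows "\<psi> (mul x y) = (\<Sum>(g, h)\<in>G \<times> G. (\<alpha> g x * \<psi> (mul g h)) * \<alpha> h y)"
proof -
  define x' where "x' = (\<Sum>g\<in>G. \<alpha> g x *s g)"
  define y' where "y' = (\<Sum>h\<in>G. \<alpha> h y *s h)"
  have "x - x' \<in> I" "y - y' \<in> I" unfolding x'_def y'_def by (rule coords)+
  then have "mul (x - x') y \<in> I" "mul x' (y - y') \<in> I" using alg_ideal_mul[OF I(1)] by blast+
  then have "mul (x - x') y + mul x' (y - y') \<in> I"
    by (rule subspace_add[OF alg_ideal_subspace[OF I(1)]])
  moreover have "mul x y - mul x' y' = mul (x - x') y + mul x' (y - y')"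
    by (simp add: mul_diff_left mul_diff_right)
  ultimately have "\<psi> (mul x y - mul x' y') = 0" using I(2) by simp
  then have "\<psi> (mul x y) = \<psi> (mul x' y')" by (simp add: functionals.linear_diff[OF lin])
  also have "mul x' y' = (\<Sum>g\<in>G. \<Sum>h\<in>G. (\<alpha> g x * \<alpha> h y) *s mul g h)"
    unfolding x'_def mul_sum_left mul_scale_left
    unfolding y'_def mul_sum_right mul_scale_right scale_sum_right scale_scale ..
  also have "\<psi> \<dots> = (\<Sum>g\<in>G. \<Sum>h\<in>G. (\<alpha> g x * \<alpha> h y) * \<psi> (mul g h))"
    by (simp only: functionals.linear_sum[OF lin] functionals.linear_scale[OF lin])
  also have "\<dots> = (\<Sum>g\<in>G. \<Sum>h\<in>G. (\<alpha> g x * \<psi> (mul g h)) * \<alpha> h y)"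
    by (intro sum.cong refl) (simp only: mult_ac)
  also have "\<dots> = (\<Sum>(g, h)\<in>G \<times> G. (\<alpha> g x * \<psi> (mul g h)) * \<alpha> h y)"
    by (rule sum.cartesian_product)
  finally show ?thesis .
qed

lemma finite_dual_mult_finite_rank:
  assumes "\<psi> \<in> fdual"
  shows "\<exists>(n::nat) u v. (\<forall>i<n. u i \<in> fdual \<and> v i \<in> fdual)
           \<and> (\<forall>x y. \<psi> (mul x y) = (\<Sum>i<n. u i x * v i y))"
proof -
  obtain I G \<alpha> where I: "alg_ideal mul scale I" "\<forall>x\<in>I. \<psi> x = 0" "finite G"
    "\<And>g. g \<in> G \<Longrightarrow> linear_functional (\<alpha> g)" "\<And>x. x - (\<Sum>g\<in>G. \<alpha> g x *s g) \<in> I"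
    "I = {x. \<forall>g\<in>G. \<alpha> g x = 0}"
    using finite_dual_kernels[OF assms] by blast
  have \<alpha>_dual: "\<alpha> g \<in> fdual" if "g \<in> G" for g
    by (rule coordinate_in_finite_dual[OF I(1,3,5) I(4)[OF that] I(6) that])
  have \<psi>_lin: "linear_functional \<psi>" by (rule finite_dual_linear[OF assms])
  have expand: "\<psi> (mul x y) = (\<Sum>(g, h)\<in>G \<times> G. (\<alpha> g x * \<psi> (mul g h)) * \<alpha> h y)" for x y
    by (rule finite_dual_mult_eq_sum[OF I(1,2) \<psi>_lin I(5)])
  obtain e where e: "bij_betw e {..<card (G \<times> G)} (G \<times> G)"
    using ex_bij_betw_nat_finite[OF finite_cartesian_product[OF I(3) I(3)]]
    unfolding atLeast0LessThan by blast
  define u where "u = (\<lambda>i x. \<alpha> (fst (e i)) x * \<psi> (mul (fst (e i)) (snd (e i))))"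
  define v where "v = (\<lambda>i. \<alpha> (snd (e i)))"
  have uv_dual: "u i \<in> fdual \<and> v i \<in> fdual" if "i < card (G \<times> G)" for i
  proof -
    have "e i \<in> G \<times> G" using bij_betw_apply[OF e] that by simp
    then have fst: "fst (e i) \<in> G" and snd: "snd (e i) \<in> G" by (auto simp: mem_Times_iff)
    have "u i = (\<lambda>x. \<psi> (mul (fst (e i)) (snd (e i))) * \<alpha> (fst (e i)) x)"
      unfolding u_def by (simp add: mult.commute)
    then have "u i \<in> fdual" using finite_dual_scale[OF \<alpha>_dual[OF fst]] by simp
    moreover have "v i \<in> fdual" unfolding v_def by (rule \<alpha>_dual[OF snd])
    ultimately show ?thesis ..
  qed
  have uv_expand: "\<psi> (mul x y) = (\<Sum>i<card (G \<times> G). u i x * v i y)" for x y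
  proof -
    have "(\<Sum>i<card (G \<times> G). u i x * v i y)
        = (\<Sum>i<card (G \<times> G). (\<lambda>(g, h). (\<alpha> g x * \<psi> (mul g h)) * \<alpha> h y) (e i))"
      unfolding u_def v_def by (simp add: case_prod_beta)
    also have "\<dots> = (\<Sum>(g, h)\<in>G \<times> G. (\<alpha> g x * \<psi> (mul g h)) * \<alpha> h y)"
      by (rule sum.reindex_bij_betw[OF e])
    finally show ?thesis unfolding expand[of x y] by (rule sym)
  qed
  show ?thesis
    by (intro exI[of _ "card (G \<times> G)"] exI[of _ u] exI[of _ v] conjI allI impI)
      (simp_all only: uv_dual uv_expand)
qed

end

lemma finite_dual_pullback:
  fixes scaleS :: "'k::field \<Rightarrow> 's::ab_group_add \<Rightarrow> 's" and scaleR :: "'k \<Rightarrow> 'r::ab_group_add \<Rightarrow> 'r"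
  assumes S: "kspace scaleS" and R: "unital_algebra scaleR mulR oneR"
    and h_add: "\<And>x y. h (x + y) = h x + h y" and h_scale: "\<And>c x. h (scaleS c x) = scaleR c (h x)"
    and h_mul: "\<And>x y. h (mulS x y) = mulR (h x) (h y)"
    and \<psi>: "\<psi> \<in> finite_dual mulR scaleR"
  shows "(\<lambda>x. \<psi> (h x)) \<in> finite_dual mulS scaleS"
proof -
  interpret R: unital_algebra scaleR mulR oneR by (rule R)
  interpret S: kspace scaleS by (rule S)
  interpret h: additive h by unfold_locales (rule h_add)
  have h_linear: "S.linear_functional (\<lambda>x. f (h x))" if "R.linear_functional f" for f
    using that unfolding R.linear_functional_iff S.linear_functional_iff by (simp add: h_add h_scale)
  obtain I G \<alpha> where I: "alg_ideal mulR scaleR I" "\<forall>x\<in>I. \<psi> x = 0" "finite G"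
    "\<And>g. g \<in> G \<Longrightarrow> R.linear_functional (\<alpha> g)" "\<And>x. x - (\<Sum>g\<in>G. scaleR (\<alpha> g x) g) \<in> I"
    "I = {x. \<forall>g\<in>G. \<alpha> g x = 0}"
    using R.finite_dual_kernels[OF \<psi>] by blast
  define J where "J = {x. h x \<in> I}"
  have "J = {x. \<forall>g\<in>G. \<alpha> g (h x) = 0}" unfolding J_def I(6) by simp
  then have codim: "fin_codim scaleS J"
    using S.fin_codim_kernels[OF I(3), of "\<lambda>g x. \<alpha> g (h x)"] h_linear I(4) by simp
  have ideal: "alg_ideal mulS scaleS J"
    using I(1) unfolding alg_ideal_def J_def by (simp add: h.zero h.minus h_add h_scale h_mul)
  show ?thesis
    by (rule S.finite_dual_intro[OF h_linear[OF R.finite_dual_linear[OF \<psi>]] ideal codim])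
      (use I(2) in \<open>simp add: J_def\<close>)
qed

section \<open>Arithmetic in the Ore extension\<close>

definition lsmult :: "'a::ring_1 \<Rightarrow> 'a poly \<Rightarrow> 'a poly" where
  "lsmult a p = map_poly ((*) a) p"

lemma coeff_lsmult [simp]: "coeff (lsmult a p) i = a * coeff p i"
  unfolding lsmult_def by (simp add: coeff_map_poly)

lemma lsmult_add_right: "lsmult a (p + q) = lsmult a p + lsmult a q"
  by (rule poly_eqI) (simp add: distrib_left)

lemma lsmult_add_left: "lsmult (a + b) p = lsmult a p + lsmult b p"
  by (rule poly_eqI) (simp add: distrib_right)

lemma lsmult_0_left [simp]: "lsmult 0 p = 0"
  by (rule poly_eqI) simp

lemma lsmult_0_right [simp]: "lsmult a 0 = 0"
  by (rule poly_eqI) simp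

lemma lsmult_lsmult: "lsmult a (lsmult b p) = lsmult (a * b) p"
  by (rule poly_eqI) (simp add: mult.assoc)

lemma lsmult_1 [simp]: "lsmult 1 p = p"
  by (rule poly_eqI) simp

lemma lsmult_pCons: "lsmult a (pCons c p) = pCons (a * c) (lsmult a p)"
  by (rule poly_eqI) (simp add: coeff_pCons split: nat.splits)

lemma lsmult_monom: "lsmult a (monom b n) = monom (a * b) n"
  by (rule poly_eqI) simp

lemma degree_lsmult_le: "degree (lsmult a p) \<le> degree p"
  by (rule degree_le) (simp add: coeff_eq_0)

lemma lsmult_sum_right: "lsmult a (\<Sum>i\<in>A. f i) = (\<Sum>i\<in>A. lsmult a (f i))"
  by (induction A rule: infinite_finite_induct) (simp_all add: lsmult_add_right)

lemma pCons_0_add: "pCons 0 (p + q) = pCons 0 p + pCons 0 q"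
  by simp

lemma pCons_0_sum: "pCons 0 (\<Sum>i\<in>A. f i) = (\<Sum>i\<in>A. pCons 0 (f i))"
  by (induction A rule: infinite_finite_induct) (simp_all del: add_pCons add: pCons_0_add)

lemma poly_eq_sum_monom_lessThan:
  assumes "\<forall>j\<ge>n. coeff p j = 0"
  shows "p = (\<Sum>j<n. monom (coeff p j) j)"
  by (rule poly_eqI) (use assms in \<open>auto simp: coeff_sum not_less\<close>)

lemma shift_pow_const: "(pCons 0 ^^ n) [:c:] = monom c n"
  by (induction n) (simp_all add: monom_0 monom_Suc)

lemma shift_pow_add: "(pCons 0 ^^ n) (p + q) = (pCons 0 ^^ n) p + (pCons 0 ^^ n) q"
  by (induction n) (simp_all del: add_pCons add: pCons_0_add)

locale ore_extension =
  fixes \<iota> :: "'k::field \<Rightarrow> 'a::ring_1" and \<theta> \<delta> :: "'a \<Rightarrow> 'a"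
  assumes alg: "k_algebra \<iota>"
    and theta_linear: "k_linear \<iota> \<theta>"
    and theta_multiplicative: "\<forall>a b. \<theta> (a * b) = \<theta> a * \<theta> b" and theta_one: "\<theta> 1 = 1"
    and delta_linear: "k_linear \<iota> \<delta>"
    and delta_derivation: "\<forall>a b. \<delta> (a * b) = \<theta> a * \<delta> b + \<delta> a * b"
begin

abbreviation tm :: "'a poly \<Rightarrow> 'a poly" where
  "tm \<equiv> tmul \<theta> \<delta>"

abbreviation ore_times :: "'a poly \<Rightarrow> 'a poly \<Rightarrow> 'a poly" (infixl "\<star>" 70) where
  "p \<star> q \<equiv> ore_mult \<theta> \<delta> p q"

lemma theta_add: "\<theta> (a + b) = \<theta> a + \<theta> b"
  using theta_linear unfolding k_linear_def by blast

lemma delta_add: "\<delta> (a + b) = \<delta> a + \<delta> b"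
  using delta_linear unfolding k_linear_def by blast

lemma iota_add: "\<iota> (x + y) = \<iota> x + \<iota> y"
  using alg unfolding k_algebra_def by blast

sublocale theta: additive \<theta> by unfold_locales (rule theta_add)
sublocale delta: additive \<delta> by unfold_locales (rule delta_add)
sublocale iota: additive \<iota> by unfold_locales (rule iota_add)

declare theta.zero [simp] delta.zero [simp] iota.zero [simp]

lemma theta_mult: "\<theta> (a * b) = \<theta> a * \<theta> b"
  using theta_multiplicative by blast

lemma delta_mult: "\<delta> (a * b) = \<theta> a * \<delta> b + \<delta> a * b"
  using delta_derivation by blast

lemma theta_scalar: "\<theta> (\<iota> c * a) = \<iota> c * \<theta> a"
  using theta_linear unfolding k_linear_def by blast

lemma delta_scalar: "\<delta> (\<iota> c * a) = \<iota> c * \<delta> a"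
  using delta_linear unfolding k_linear_def by blast

lemma iota_mult: "\<iota> (x * y) = \<iota> x * \<iota> y"
  using alg unfolding k_algebra_def by blast

lemma iota_1 [simp]: "\<iota> 1 = 1"
  using alg unfolding k_algebra_def by blast

lemma iota_commute: "\<iota> c * a = a * \<iota> c"
  using alg unfolding k_algebra_def by blast

lemma delta_1 [simp]: "\<delta> 1 = 0"
  using delta_mult[of 1 1] theta_one by simp

lemma theta_iota [simp]: "\<theta> (\<iota> c) = \<iota> c"
  using theta_scalar[of c 1] theta_one by simp

lemma delta_iota [simp]: "\<delta> (\<iota> c) = 0"
  using delta_scalar[of c 1] by simp

lemma coeff_tm: "coeff (tm p) i = (if i = 0 then 0 else \<theta> (coeff p (i - 1))) + \<delta> (coeff p i)"
  unfolding tmul_def by (simp add: coeff_map_poly coeff_pCons split: nat.splits)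

lemma tm_add: "tm (p + q) = tm p + tm q"
  by (rule poly_eqI) (simp add: coeff_tm theta_add delta_add algebra_simps)

lemma additive_tm_pow: "additive (tm ^^ n)"
  by unfold_locales (induction n, simp_all add: tm_add)

lemmas tm_pow_add = additive.add[OF additive_tm_pow]
  and tm_pow_zero [simp] = additive.zero[OF additive_tm_pow]
  and tm_pow_sum = additive.sum[OF additive_tm_pow]

lemma tm_pCons_0: "tm (pCons 0 p) = pCons 0 (tm p)"
  by (rule poly_eqI) (simp add: coeff_tm coeff_pCons split: nat.splits)

lemma tm_pow_pCons_0: "(tm ^^ n) (pCons 0 p) = pCons 0 ((tm ^^ n) p)"
  by (induction n) (simp_all add: tm_pCons_0)

lemma tm_pow_shift_pow: "(tm ^^ n) ((pCons 0 ^^ j) p) = (pCons 0 ^^ j) ((tm ^^ n) p)"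
  by (induction j) (simp_all add: tm_pow_pCons_0)

lemma tm_lsmult: "tm (lsmult b p) = lsmult (\<theta> b) (tm p) + lsmult (\<delta> b) p"
  by (rule poly_eqI) (simp add: coeff_tm theta_mult delta_mult algebra_simps)

lemma tm_pCons: "tm (pCons b p) = pCons (\<delta> b) ([:\<theta> b:] + tm p)"
  by (rule poly_eqI) (simp add: coeff_tm coeff_pCons split: nat.splits)

lemma tm_1: "tm [:1:] = pCons 0 [:1:]"
  by (rule poly_eqI) (simp add: coeff_tm coeff_pCons theta_one split: nat.splits)

lemma ore_mult_eq_sum: "p \<star> q = (\<Sum>i\<le>degree p. lsmult (coeff p i) ((tm ^^ i) q))"
proof -
  have "(\<Sum>j\<le>degree q. (pCons 0 ^^ j) ((tm ^^ i) [:coeff q j:])) = (tm ^^ i) q" for i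
  proof -
    have "(\<Sum>j\<le>degree q. (pCons 0 ^^ j) ((tm ^^ i) [:coeff q j:]))
        = (\<Sum>j\<le>degree q. (tm ^^ i) (monom (coeff q j) j))"
      by (simp only: tm_pow_shift_pow[symmetric] shift_pow_const)
    also have "\<dots> = (tm ^^ i) q" by (simp only: tm_pow_sum[symmetric] poly_as_sum_of_monoms)
    finally show ?thesis .
  qed
  then show ?thesis
    unfolding ore_mult_def lsmult_def[symmetric] by (simp only: lsmult_sum_right[symmetric])
qed

lemma ore_mult_eq_sum_le:
  assumes "degree p \<le> N"
  shows "p \<star> q = (\<Sum>i\<le>N. lsmult (coeff p i) ((tm ^^ i) q))"
  unfolding ore_mult_eq_sum
  by (rule sum.mono_neutral_left) (use assms in \<open>auto simp: coeff_eq_0\<close>)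

lemma ore_mult_0_left [simp]: "0 \<star> q = 0"
  by (simp add: ore_mult_eq_sum)

lemma ore_mult_pCons_left: "pCons a p \<star> q = lsmult a q + p \<star> tm q"
proof -
  have "pCons a p \<star> q = (\<Sum>i\<le>Suc (degree p). lsmult (coeff (pCons a p) i) ((tm ^^ i) q))"
    by (rule ore_mult_eq_sum_le) (rule degree_pCons_le)
  also have "\<dots> = lsmult a q + (\<Sum>i\<le>degree p. lsmult (coeff p i) ((tm ^^ Suc i) q))"
    by (subst sum.atMost_Suc_shift) simp
  also have "(\<Sum>i\<le>degree p. lsmult (coeff p i) ((tm ^^ Suc i) q)) = p \<star> tm q"
    by (simp add: ore_mult_eq_sum funpow_swap1)
  finally show ?thesis .
qed

lemma ore_mult_const_left: "[:a:] \<star> q = lsmult a q"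
  by (simp add: ore_mult_pCons_left)

lemma ore_mult_add_left: "(p1 + p2) \<star> q = p1 \<star> q + p2 \<star> q"
proof -
  define N where "N = max (degree p1) (degree p2)"
  have "degree p1 \<le> N" "degree p2 \<le> N" "degree (p1 + p2) \<le> N"
    by (auto simp: N_def intro: degree_add_le)
  then show ?thesis
    by (simp add: ore_mult_eq_sum_le[of _ N] lsmult_add_left sum.distrib)
qed

lemma ore_mult_add_right: "p \<star> (q1 + q2) = p \<star> q1 + p \<star> q2"
  unfolding ore_mult_eq_sum by (simp add: tm_pow_add lsmult_add_right sum.distrib)

lemma ore_mult_0_right [simp]: "p \<star> 0 = 0"
  using ore_mult_add_right[of p 0 0] by simp

lemma ore_mult_sum_left: "(\<Sum>i\<in>A. f i) \<star> q = (\<Sum>i\<in>A. f i \<star> q)"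
  by (induction A rule: infinite_finite_induct) (simp_all add: ore_mult_add_left)

lemma ore_mult_lsmult_left: "lsmult a p \<star> q = lsmult a (p \<star> q)"
proof -
  have "lsmult a p \<star> q = (\<Sum>i\<le>degree p. lsmult (coeff (lsmult a p) i) ((tm ^^ i) q))"
    by (rule ore_mult_eq_sum_le[OF degree_lsmult_le])
  then show ?thesis by (simp add: ore_mult_eq_sum lsmult_lsmult lsmult_sum_right)
qed

lemma ore_mult_tm_left: "tm p \<star> r = tm (p \<star> r)"
proof (induction p arbitrary: r)
  case 0
  show ?case by (simp add: tmul_def)
next
  case (pCons b p)
  have "tm (pCons b p) \<star> r = lsmult (\<delta> b) r + ([:\<theta> b:] + tm p) \<star> tm r"
    by (simp add: tm_pCons ore_mult_pCons_left)
  also have "\<dots> = lsmult (\<delta> b) r + lsmult (\<theta> b) (tm r) + tm (p \<star> tm r)"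
    by (simp add: ore_mult_add_left ore_mult_const_left pCons.IH)
  also have "\<dots> = tm (pCons b p \<star> r)"
    by (simp add: ore_mult_pCons_left tm_add tm_lsmult algebra_simps)
  finally show ?case .
qed

lemma ore_mult_assoc: "p \<star> q \<star> r = p \<star> (q \<star> r)"
proof (induction p arbitrary: q)
  case (pCons a p)
  show ?case
    by (simp add: ore_mult_pCons_left ore_mult_add_left ore_mult_lsmult_left pCons.IH
        ore_mult_tm_left)
qed simp

lemma ore_mult_1_left [simp]: "[:1:] \<star> q = q"
  by (simp add: ore_mult_const_left)

lemma ore_mult_pCons_0_right: "p \<star> pCons 0 q = pCons 0 (p \<star> q)"
  unfolding ore_mult_eq_sum by (simp add: tm_pow_pCons_0 lsmult_pCons pCons_0_sum)

lemma ore_mult_1_right [simp]: "p \<star> [:1:] = p"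
  by (induction p) (simp_all add: ore_mult_pCons_left tm_1 ore_mult_pCons_0_right lsmult_pCons)

lemma ore_mult_lsmult_iota_right: "p \<star> lsmult (\<iota> c) q = lsmult (\<iota> c) (p \<star> q)"
proof -
  have "(tm ^^ n) (lsmult (\<iota> c) q) = lsmult (\<iota> c) ((tm ^^ n) q)" for n
    by (induction n) (simp_all add: tm_lsmult)
  then show ?thesis
    unfolding ore_mult_eq_sum by (simp add: lsmult_lsmult iota_commute lsmult_sum_right)
qed

lemma ore_scal_eq_lsmult: "ore_scal \<iota> c p = lsmult (\<iota> c) p"
  unfolding ore_scal_def lsmult_def by simp

sublocale A: unital_algebra "\<lambda>c a. \<iota> c * a" "(*)" 1
  by unfold_locales (simp_all add: iota_add iota_mult algebra_simps, metis iota_commute mult.assoc)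

sublocale R: unital_algebra "ore_scal \<iota>" "(\<star>)" "[:1:]"
  by unfold_locales (simp_all add: ore_scal_eq_lsmult lsmult_add_right lsmult_add_left iota_add
      iota_mult lsmult_lsmult ore_mult_add_left ore_mult_add_right ore_mult_lsmult_left
      ore_mult_lsmult_iota_right ore_mult_assoc)

sublocale P: unital_algebra "smult :: 'k \<Rightarrow> 'k poly \<Rightarrow> 'k poly" "(*)" 1
  by unfold_locales (simp_all add: smult_add_right smult_add_left algebra_simps)

end

section \<open>The Ore extension as a tensor product\<close>

lemma tensor_span_intro:
  fixes n :: nat
  assumes "\<And>i. i < n \<Longrightarrow> c i \<in> C \<and> d i \<in> D"
  shows "(\<lambda>(x, y). \<Sum>i<n. c i x * d i y) \<in> tensor_span C D"
  unfolding tensor_span_def using assms by blast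

context ore_extension
begin

definition embed_poly :: "'k poly \<Rightarrow> 'a poly" where
  "embed_poly q = map_poly \<iota> q"

definition ore_tensor :: "'a \<Rightarrow> 'k poly \<Rightarrow> 'a poly" where
  "ore_tensor a q = map_poly (\<lambda>c. a * \<iota> c) q"

lemma coeff_embed_poly [simp]: "coeff (embed_poly q) i = \<iota> (coeff q i)"
  unfolding embed_poly_def by (simp add: coeff_map_poly)

lemma coeff_ore_tensor [simp]: "coeff (ore_tensor a q) i = a * \<iota> (coeff q i)"
  unfolding ore_tensor_def by (simp add: coeff_map_poly)

lemma ore_tensor_eq: "ore_tensor a q = [:a:] \<star> embed_poly q"
  by (simp add: ore_mult_const_left poly_eq_iff)

lemma ore_tensor_1_left: "ore_tensor 1 q = embed_poly q"
  by (simp add: poly_eq_iff)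

lemma ore_tensor_1_1: "ore_tensor 1 1 = [:1:]"
  by (simp add: poly_eq_iff coeff_pCons split: nat.splits)

lemma ore_tensor_monom: "ore_tensor a (monom 1 j) = monom a j"
  by (simp add: poly_eq_iff)

lemma degree_ore_tensor_le: "degree (ore_tensor a q) \<le> degree q"
  by (rule degree_le) (simp add: coeff_eq_0)

lemma ore_tensor_mult: "ore_tensor b y \<star> embed_poly p = ore_tensor b (y * p)"
proof (induction y arbitrary: p)
  case 0
  show ?case by (simp add: ore_tensor_def)
next
  case (pCons c y)
  have "ore_tensor b (pCons c y) = pCons (b * \<iota> c) (ore_tensor b y)"
    by (simp add: poly_eq_iff coeff_pCons split: nat.splits)
  moreover have "tm (embed_poly p) = embed_poly (pCons 0 p)"
    by (simp add: poly_eq_iff coeff_tm coeff_pCons split: nat.splits)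
  moreover have "lsmult (b * \<iota> c) (embed_poly p) = ore_tensor b (smult c p)"
    by (simp add: poly_eq_iff iota_mult mult.assoc)
  moreover have "ore_tensor b (smult c p) + ore_tensor b (y * pCons 0 p) = ore_tensor b (pCons c y * p)"
    by (simp add: poly_eq_iff iota_add algebra_simps)
  ultimately show ?case by (simp add: ore_mult_pCons_left pCons.IH)
qed

lemma embed_poly_mult: "embed_poly (p * q) = embed_poly p \<star> embed_poly q"
  using ore_tensor_mult[of 1 p q] by (simp add: ore_tensor_1_left)

lemma embed_poly_add: "embed_poly (p + q) = embed_poly p + embed_poly q"
  by (simp add: poly_eq_iff iota_add)

lemma embed_poly_smult: "embed_poly (smult c q) = ore_scal \<iota> c (embed_poly q)"
  by (simp add: poly_eq_iff ore_scal_eq_lsmult iota_mult)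

lemma finite_dual_comp_const: "u \<in> R.fdual \<Longrightarrow> (\<lambda>a. u [:a:]) \<in> A.fdual"
  by (rule finite_dual_pullback[OF A.kspace_axioms R.unital_algebra_axioms])
    (simp_all add: ore_scal_eq_lsmult lsmult_pCons ore_mult_const_left)

lemma finite_dual_comp_embed_poly: "u \<in> R.fdual \<Longrightarrow> (\<lambda>q. u (embed_poly q)) \<in> P.fdual"
  by (rule finite_dual_pullback[OF P.kspace_axioms R.unital_algebra_axioms])
    (simp_all add: embed_poly_add embed_poly_smult embed_poly_mult)

definition dual_tensor :: "('a poly \<Rightarrow> 'k) \<Rightarrow> 'a \<times> 'k poly \<Rightarrow> 'k" where
  "dual_tensor \<psi> = (\<lambda>(a, q). \<psi> (ore_tensor a q))"

lemma dual_tensor_apply [simp]: "dual_tensor \<psi> (a, q) = \<psi> (ore_tensor a q)"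
  by (simp add: dual_tensor_def)

lemma dual_tensor_in_tensor_span:
  assumes "\<psi> \<in> R.fdual"
  shows "dual_tensor \<psi> \<in> tensor_span A.fdual P.fdual"
proof -
  obtain n :: nat and u v where uv: "\<forall>i<n. u i \<in> R.fdual \<and> v i \<in> R.fdual"
    "\<forall>x y. \<psi> (x \<star> y) = (\<Sum>i<n. u i x * v i y)"
    using R.finite_dual_mult_finite_rank[OF assms] by blast
  have "dual_tensor \<psi> = (\<lambda>(a, q). \<Sum>i<n. u i [:a:] * v i (embed_poly q))"
    by (simp add: dual_tensor_def ore_tensor_eq uv(2))
  also have "\<dots> \<in> tensor_span A.fdual P.fdual"
    using uv(1) finite_dual_comp_const finite_dual_comp_embed_poly
    by (intro tensor_span_intro[of n "\<lambda>i a. u i [:a:]" _ "\<lambda>i q. v i (embed_poly q)"]) blast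
  finally show ?thesis .
qed

lemma linear_functional_eq_sum_monom:
  assumes "R.linear_functional \<psi>"
  shows "\<psi> x = (\<Sum>j\<le>degree x. dual_tensor \<psi> (coeff x j, monom 1 j))"
proof -
  have "\<psi> x = \<psi> (\<Sum>j\<le>degree x. monom (coeff x j) j)" by (simp add: poly_as_sum_of_monoms)
  also have "\<dots> = (\<Sum>j\<le>degree x. \<psi> (monom (coeff x j) j))"
    by (rule R.functionals.linear_sum[OF assms])
  finally show ?thesis by (simp add: ore_tensor_monom)
qed

lemma inj_on_dual_tensor: "inj_on dual_tensor R.fdual"
proof (rule inj_onI)
  fix \<psi>1 \<psi>2 assume \<psi>: "\<psi>1 \<in> R.fdual" "\<psi>2 \<in> R.fdual" and eq: "dual_tensor \<psi>1 = dual_tensor \<psi>2"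
  show "\<psi>1 = \<psi>2"
  proof
    fix x
    show "\<psi>1 x = \<psi>2 x"
      using linear_functional_eq_sum_monom[OF R.finite_dual_linear[OF \<psi>(1)], of x]
        linear_functional_eq_sum_monom[OF R.finite_dual_linear[OF \<psi>(2)], of x] eq
      by simp
  qed
qed

end

section \<open>Centrality of polynomials in t^d\<close>

lemma word_op_Nil [simp]: "word_op \<theta> \<delta> [] = id"
  by (simp add: word_op_def)

lemma word_op_Cons [simp]: "word_op \<theta> \<delta> (b # w) = (if b then \<theta> else \<delta>) \<circ> word_op \<theta> \<delta> w"
  by (simp add: word_op_def)

lemma word_op_replicate: "word_op \<theta> \<delta> (replicate n True) = \<theta> ^^ n"
  by (induction n) simp_all

lemma words_0: "words i 0 = (if i = 0 then {[]} else {})"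
  by (auto simp: words_def)

lemma words_Suc:
  "words i (Suc n) = (if i = 0 then {} else Cons True ` words (i - 1) n) \<union> Cons False ` words i n"
proof (rule set_eqI)
  fix w
  show "w \<in> words i (Suc n) \<longleftrightarrow>
      w \<in> (if i = 0 then {} else Cons True ` words (i - 1) n) \<union> Cons False ` words i n"
    by (cases w) (auto simp: words_def split: if_splits)
qed

lemma finite_words: "finite (words i n)"
proof (rule finite_subset)
  show "words i n \<subseteq> {w. set w \<subseteq> UNIV \<and> length w = n}" by (auto simp: words_def)
qed (rule finite_lists_length_eq, simp)

lemma words_eq_empty:
  assumes "n < i"
  shows "words i n = {}"
proof -
  have "length (filter id w) \<noteq> i" if "length w = n" for w :: "bool list"
    using length_filter_le[of id w] that assms by linarith
  then show ?thesis by (auto simp: words_def)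
qed

lemma words_diag: "words n n = {replicate n True}"
proof -
  have "w = replicate n True" if "length w = n" "length (filter id w) = n" for w
  proof -
    have "y" if "y \<in> set w" for y
    proof (rule ccontr)
      assume "\<not> y"
      with that have "length (filter id w) < length w" by (intro length_filter_less) auto
      with \<open>length w = n\<close> \<open>length (filter id w) = n\<close> show False by simp
    qed
    then have "\<forall>y\<in>set w. y = True" by blast
    from replicate_length_same[OF this] show ?thesis using \<open>length w = n\<close> by simp
  qed
  then show ?thesis by (auto simp: words_def)
qed

context ore_extension
begin

definition word_sum :: "nat \<Rightarrow> nat \<Rightarrow> 'a \<Rightarrow> 'a" where
  "word_sum i n a = (\<Sum>w\<in>words i n. word_op \<theta> \<delta> w a)"

lemma word_sum_Suc:
  "word_sum i (Suc n) a = (if i = 0 then 0 else \<theta> (word_sum (i - 1) n a)) + \<delta> (word_sum i n a)"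
proof -
  have sum_Cons: "(\<Sum>w\<in>Cons b ` W. word_op \<theta> \<delta> w a) = (\<Sum>w\<in>W. (if b then \<theta> else \<delta>) (word_op \<theta> \<delta> w a))"
    for b W by (subst sum.reindex) (auto simp: inj_on_def)
  have "word_sum i (Suc n) a
      = (\<Sum>w\<in>(if i = 0 then {} else Cons True ` words (i - 1) n). word_op \<theta> \<delta> w a)
        + (\<Sum>w\<in>Cons False ` words i n. word_op \<theta> \<delta> w a)"
    unfolding word_sum_def words_Suc by (rule sum.union_disjoint) (auto simp: finite_words)
  also have "\<dots> = (if i = 0 then 0 else \<theta> (word_sum (i - 1) n a)) + \<delta> (word_sum i n a)"
    by (simp add: sum_Cons word_sum_def theta.sum delta.sum)
  finally show ?thesis .
qed

lemma coeff_tm_pow_const: "coeff ((tm ^^ n) [:a:]) i = word_sum i n a"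
proof (induction n arbitrary: i)
  case 0
  show ?case by (simp add: word_sum_def words_0 coeff_pCons split: nat.splits)
next
  case (Suc n)
  show ?case by (cases i) (simp_all add: coeff_tm Suc.IH word_sum_Suc)
qed

lemma ore_mult_shift_pow_left: "(pCons 0 ^^ n) p \<star> r = p \<star> (tm ^^ n) r"
proof (induction n arbitrary: r)
  case (Suc n)
  have "(pCons 0 ^^ Suc n) p \<star> r = (pCons 0 ^^ n) p \<star> tm r" by (simp add: ore_mult_pCons_left)
  then show ?case by (simp add: Suc.IH funpow_swap1)
qed simp

lemma ore_mult_shift_pow_right: "r \<star> (pCons 0 ^^ n) p = (pCons 0 ^^ n) (r \<star> p)"
  by (induction n) (simp_all add: ore_mult_pCons_0_right)

definition central :: "'a poly \<Rightarrow> bool" where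
  "central c \<longleftrightarrow> (\<forall>r. c \<star> r = r \<star> c)"

lemma central_add: "central a \<Longrightarrow> central b \<Longrightarrow> central (a + b)"
  unfolding central_def by (simp add: ore_mult_add_left ore_mult_add_right)

lemma central_mult: "central a \<Longrightarrow> central b \<Longrightarrow> central (a \<star> b)"
  unfolding central_def by (metis ore_mult_assoc)

lemma embed_poly_const: "embed_poly [:c:] = [:\<iota> c:]"
  by (simp add: poly_eq_iff coeff_pCons split: nat.splits)

lemma embed_poly_monom_1: "embed_poly (monom 1 n) = monom 1 n"
  by (rule poly_eqI) simp

lemma central_const_iota: "central [:\<iota> c:]"
  unfolding central_def
proof
  fix r
  have "r \<star> [:\<iota> c:] = r \<star> lsmult (\<iota> c) [:1:]" by (simp add: lsmult_pCons)
  also have "\<dots> = lsmult (\<iota> c) r" by (simp add: ore_mult_lsmult_iota_right)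
  finally show "[:\<iota> c:] \<star> r = r \<star> [:\<iota> c:]" by (simp add: ore_mult_const_left)
qed

end

locale ore_extension_periodic = ore_extension +
  fixes d :: nat
  assumes d_pos: "0 < d" and theta_d: "\<theta> ^^ d = id"
    and words_zero: "\<forall>i<d. \<forall>a. (\<Sum>w\<in>words i d. word_op \<theta> \<delta> w a) = 0"
begin

lemma tm_pow_d_const: "(tm ^^ d) [:a:] = monom a d"
proof (rule poly_eqI)
  fix i
  consider "i < d" | "i = d" | "d < i" by linarith
  then show "coeff ((tm ^^ d) [:a:]) i = coeff (monom a d) i"
  proof cases
    case 1
    then show ?thesis using words_zero by (simp add: coeff_tm_pow_const word_sum_def)
  next
    case 2
    then show ?thesis by (simp add: coeff_tm_pow_const word_sum_def words_diag word_op_replicate theta_d)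
  next
    case 3
    then show ?thesis by (simp add: coeff_tm_pow_const word_sum_def words_eq_empty)
  qed
qed

lemma tm_pow_d: "(tm ^^ d) r = (pCons 0 ^^ d) r"
proof (induction r)
  case 0
  have "(pCons 0 ^^ n) 0 = 0" for n :: nat by (induction n) simp_all
  then show ?case by simp
next
  case (pCons a r)
  have pCons_eq: "pCons a r = [:a:] + pCons 0 r" by simp
  have "(tm ^^ d) (pCons a r) = (tm ^^ d) [:a:] + pCons 0 ((tm ^^ d) r)"
    by (subst pCons_eq) (simp only: tm_pow_add tm_pow_pCons_0)
  also have "\<dots> = (pCons 0 ^^ d) [:a:] + pCons 0 ((pCons 0 ^^ d) r)"
    by (simp only: tm_pow_d_const pCons.IH shift_pow_const)
  also have "\<dots> = (pCons 0 ^^ d) (pCons a r)"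
    by (subst pCons_eq) (simp only: shift_pow_add funpow_swap1)
  finally show ?case .
qed

lemma central_monom_d: "central (monom 1 d)"
  unfolding central_def
proof
  fix r
  have monom_eq: "monom 1 d = (pCons 0 ^^ d) [:1:]" by (simp add: shift_pow_const)
  show "monom 1 d \<star> r = r \<star> monom 1 d"
    unfolding monom_eq ore_mult_shift_pow_left ore_mult_shift_pow_right by (simp add: tm_pow_d)
qed

lemma central_embed_pcompose: "central (embed_poly (pcompose m (monom 1 d)))"
proof (induction m)
  case 0
  show ?case by (simp add: central_def embed_poly_def)
next
  case (pCons a m)
  have "embed_poly (pcompose (pCons a m) (monom 1 d))
      = [:\<iota> a:] + monom 1 d \<star> embed_poly (pcompose m (monom 1 d))"
    by (simp add: pcompose_pCons embed_poly_add embed_poly_mult embed_poly_const embed_poly_monom_1)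
  then show ?case
    using central_add central_mult central_const_iota central_monom_d pCons.IH by simp
qed

end

section \<open>Surjectivity onto the tensor product of the finite duals\<close>

lemma kspace_smult: "kspace (smult :: 'k::field \<Rightarrow> 'k poly \<Rightarrow> 'k poly)"
  by unfold_locales (simp_all add: smult_add_right smult_add_left)

lemma degree_span_le:
  fixes H :: "'k::field poly set"
  assumes "finite H" "y \<in> module.span smult H"
  shows "degree y \<le> (\<Sum>h\<in>H. degree h)"
proof -
  interpret kspace "smult :: 'k \<Rightarrow> 'k poly \<Rightarrow> 'k poly" by (rule kspace_smult)
  obtain u where y: "y = (\<Sum>h\<in>H. smult (u h) h)" using assms by (auto simp: span_finite)
  show ?thesis unfolding y
  proof (rule degree_sum_le[OF assms(1)])
    fix h assume "h \<in> H"
    then have "degree h \<le> (\<Sum>h\<in>H. degree h)" using assms(1) by (intro member_le_sum) auto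
    then show "degree (smult (u h) h) \<le> (\<Sum>h\<in>H. degree h)" using degree_smult_le order_trans by blast
  qed
qed

lemma fin_codim_ideal_contains_monic_pcompose:
  fixes Q :: "'k::field poly set"
  assumes Q: "alg_ideal (*) smult Q" "fin_codim smult Q" and d: "0 < d"
  shows "\<exists>m. lead_coeff (pcompose m (monom 1 d)) = 1 \<and> pcompose m (monom 1 d) \<in> Q"
proof -
  interpret kspace "smult :: 'k \<Rightarrow> 'k poly \<Rightarrow> 'k poly" by (rule kspace_smult)
  obtain G \<alpha> where G: "finite G" "\<And>g. g \<in> G \<Longrightarrow> linear_functional (\<alpha> g)"
    "\<And>x. x - (\<Sum>g\<in>G. smult (\<alpha> g x) g) \<in> Q" "Q = {x. \<forall>g\<in>G. \<alpha> g x = 0}"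
    using fin_codim_imp_kernels[OF alg_ideal_subspace[OF Q(1)] Q(2)] by blast
  define \<beta> where "\<beta> g m = \<alpha> g (pcompose m (monom 1 d))" for g m
  have \<beta>_linear: "linear_functional (\<beta> g)" if "g \<in> G" for g
    using G(2)[OF that] unfolding \<beta>_def linear_functional_iff by (simp add: pcompose_add pcompose_smult)
  obtain H where H: "finite H" "H \<subseteq> UNIV" "\<forall>x\<in>UNIV. \<exists>y\<in>span H. \<forall>g\<in>G. \<beta> g (x - y) = 0"
    using kernels_finite_codim_in[of UNIV G \<beta>, OF subspace_UNIV G(1) \<beta>_linear] by blast
  define M where "M = Suc (\<Sum>h\<in>H. degree h)"
  obtain y where y: "y \<in> span H" "\<forall>g\<in>G. \<beta> g (monom 1 M - y) = 0" using H(3) by blast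
  define m where "m = monom 1 M - y"
  have "degree y < M" using degree_span_le[OF H(1) y(1)] by (simp add: M_def)
  then have coeff_m: "coeff m M = 1" and "degree m \<le> M"
    unfolding m_def by (simp_all add: coeff_eq_0 degree_diff_le degree_monom_le)
  then have "lead_coeff m = 1" using le_degree[of m M] by simp
  then have "lead_coeff (pcompose m (monom 1 d)) = 1"
    using lead_coeff_comp[of "monom 1 d" m] d by (simp add: degree_monom_eq)
  moreover have "pcompose m (monom 1 d) \<in> Q"
    using y(2) unfolding G(4) \<beta>_def m_def by simp
  ultimately show ?thesis by blast
qed

lemma finite_dual_poly_annihilates_monic_pcompose:
  fixes e :: "'k::field poly \<Rightarrow> 'k"
  assumes e: "e \<in> finite_dual (*) smult" and d: "0 < d"
  shows "\<exists>m. lead_coeff (pcompose m (monom 1 d)) = 1 \<and> (\<forall>q. e (q * pcompose m (monom 1 d)) = 0)"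
proof -
  interpret kspace "smult :: 'k \<Rightarrow> 'k poly \<Rightarrow> 'k poly" by (rule kspace_smult)
  obtain Q where Q: "alg_ideal (*) smult Q" "fin_codim smult Q" "\<forall>x\<in>Q. e x = 0"
    using e by (auto simp: finite_dual_iff)
  obtain m where "lead_coeff (pcompose m (monom 1 d)) = 1" "pcompose m (monom 1 d) \<in> Q"
    using fin_codim_ideal_contains_monic_pcompose[OF Q(1,2) d] by blast
  moreover have "q * x \<in> Q" if "x \<in> Q" for q x using Q(1) that unfolding alg_ideal_def by blast
  ultimately show ?thesis using Q(3) by blast
qed

context ore_extension
begin

definition tensor_functional :: "('a \<Rightarrow> 'k) \<Rightarrow> ('k poly \<Rightarrow> 'k) \<Rightarrow> 'a poly \<Rightarrow> 'k" where
  "tensor_functional c e x = (\<Sum>j\<le>degree x. c (coeff x j) * e (monom 1 j))"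

lemma tensor_functional_eq_sum_le:
  assumes c: "A.linear_functional c" and N: "degree x \<le> N"
  shows "tensor_functional c e x = (\<Sum>j\<le>N. c (coeff x j) * e (monom 1 j))"
  unfolding tensor_functional_def
  by (rule sum.mono_neutral_left) (use N A.functionals.linear_0[OF c] in \<open>auto simp: coeff_eq_0\<close>)

lemma tensor_functional_ore_tensor:
  assumes c: "A.linear_functional c" and e: "P.linear_functional e"
  shows "tensor_functional c e (ore_tensor a q) = c a * e q"
proof -
  have "c (a * \<iota> (coeff q j)) * e (monom 1 j) = c a * e (smult (coeff q j) (monom 1 j))" for j
    using A.functionals.linear_scale[OF c, of "coeff q j" a]
      P.functionals.linear_scale[OF e, of "coeff q j" "monom 1 j"]
    by (simp add: iota_commute[of "coeff q j" a])
  then have "tensor_functional c e (ore_tensor a q)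
      = c a * (\<Sum>j\<le>degree q. e (smult (coeff q j) (monom 1 j)))"
    by (simp add: tensor_functional_eq_sum_le[OF c degree_ore_tensor_le] sum_distrib_left)
  also have "(\<Sum>j\<le>degree q. e (smult (coeff q j) (monom 1 j))) = e q"
    by (simp add: P.functionals.linear_sum[OF e, symmetric] smult_monom poly_as_sum_of_monoms)
  finally show ?thesis .
qed

lemma tensor_functional_linear:
  assumes c: "A.linear_functional c"
  shows "R.linear_functional (tensor_functional c e)"
  unfolding R.linear_functional_iff
proof (intro conjI allI)
  fix x y :: "'a poly"
  define N where "N = max (degree x) (degree y)"
  have N: "degree x \<le> N" "degree y \<le> N" "degree (x + y) \<le> N"
    by (auto simp: N_def intro: degree_add_le)
  have "tensor_functional c e (x + y) = (\<Sum>j\<le>N. c (coeff (x + y) j) * e (monom 1 j))"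
    by (rule tensor_functional_eq_sum_le[OF c N(3)])
  also have "\<dots> = (\<Sum>j\<le>N. c (coeff x j) * e (monom 1 j)) + (\<Sum>j\<le>N. c (coeff y j) * e (monom 1 j))"
    by (simp add: A.functionals.linear_add[OF c] distrib_right sum.distrib)
  also have "\<dots> = tensor_functional c e x + tensor_functional c e y"
    by (simp only: tensor_functional_eq_sum_le[OF c N(1)] tensor_functional_eq_sum_le[OF c N(2)])
  finally show "tensor_functional c e (x + y) = tensor_functional c e x + tensor_functional c e y" .
next
  fix k and x :: "'a poly"
  have "degree (ore_scal \<iota> k x) \<le> degree x"
    unfolding ore_scal_eq_lsmult by (rule degree_lsmult_le)
  then have "tensor_functional c e (ore_scal \<iota> k x)
      = (\<Sum>j\<le>degree x. c (coeff (ore_scal \<iota> k x) j) * e (monom 1 j))"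
    by (rule tensor_functional_eq_sum_le[OF c])
  also have "\<dots> = (\<Sum>j\<le>degree x. k * (c (coeff x j) * e (monom 1 j)))"
  proof (intro sum.cong refl)
    fix j
    have "c (coeff (ore_scal \<iota> k x) j) = k * c (coeff x j)"
      unfolding ore_scal_eq_lsmult coeff_lsmult by (rule A.functionals.linear_scale[OF c])
    then show "c (coeff (ore_scal \<iota> k x) j) * e (monom 1 j) = k * (c (coeff x j) * e (monom 1 j))"
      by (simp only: mult.assoc)
  qed
  also have "\<dots> = k * tensor_functional c e x"
    by (simp only: tensor_functional_def sum_distrib_left)
  finally show "tensor_functional c e (ore_scal \<iota> k x) = k * tensor_functional c e x" .
qed

lemma dual_tensor_tensor_functional:
  assumes "c \<in> A.fdual" "e \<in> P.fdual"
  shows "dual_tensor (tensor_functional c e) = (\<lambda>(a, q). c a * e q)"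
  using tensor_functional_ore_tensor[OF A.finite_dual_linear[OF assms(1)] P.finite_dual_linear[OF assms(2)]]
  by (auto simp: dual_tensor_def)

lemma ore_division_step:
  assumes H: "lead_coeff H = 1" and n: "degree H \<le> n" and x: "\<forall>j\<ge>Suc n. coeff x j = 0"
  shows "\<forall>j\<ge>n. coeff (x - monom (coeff x n) (n - degree H) \<star> embed_poly H) j = 0"
proof (intro allI impI)
  fix j assume "n \<le> j"
  have eq: "monom (coeff x n) (n - degree H) \<star> embed_poly H
      = ore_tensor (coeff x n) (monom 1 (n - degree H) * H)"
    by (simp only: ore_tensor_mult[symmetric] ore_tensor_monom)
  have "\<not> j < n - degree H" using \<open>n \<le> j\<close> by simp
  then have "coeff (monom (coeff x n) (n - degree H) \<star> embed_poly H) j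
      = coeff x n * \<iota> (coeff H (j - (n - degree H)))"
    unfolding eq by (simp add: coeff_monom_mult)
  moreover have "coeff H (j - (n - degree H)) = (if j = n then 1 else 0)"
    using H n \<open>n \<le> j\<close> by (auto simp: coeff_eq_0)
  ultimately show "coeff (x - monom (coeff x n) (n - degree H) \<star> embed_poly H) j = 0"
    using x \<open>n \<le> j\<close> by (auto simp: Suc_le_eq)
qed

lemma ore_division:
  assumes H: "lead_coeff H = 1"
  shows "\<exists>r rem. x = r \<star> embed_poly H + rem \<and> (\<forall>j\<ge>degree H. coeff rem j = 0)"
proof -
  have reduce: "\<exists>r rem. x = r \<star> embed_poly H + rem \<and> (\<forall>j\<ge>degree H. coeff rem j = 0)"
    if "\<forall>j\<ge>n. coeff x j = 0" for n x
    using that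
  proof (induction n arbitrary: x)
    case 0
    then show ?case by (intro exI[of _ 0] exI[of _ x]) simp
  next
    case (Suc n)
    show ?case
    proof (cases "n < degree H")
      case True
      then show ?thesis using Suc.prems by (intro exI[of _ 0] exI[of _ x]) auto
    next
      case False
      define q where "q = monom (coeff x n) (n - degree H)"
      have "\<forall>j\<ge>n. coeff (x - q \<star> embed_poly H) j = 0"
        unfolding q_def by (rule ore_division_step[OF H _ Suc.prems]) (use False in simp)
      from Suc.IH[OF this] obtain r rem where
        rem: "x - q \<star> embed_poly H = r \<star> embed_poly H + rem" "\<forall>j\<ge>degree H. coeff rem j = 0"
        by blast
      then have "x = (q + r) \<star> embed_poly H + rem" by (simp add: ore_mult_add_left algebra_simps)
      with rem(2) show ?thesis by blast
    qed
  qed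
  show ?thesis by (rule reduce[of "Suc (degree x)"]) (simp add: coeff_eq_0)
qed

lemma tensor_functional_vanishes:
  assumes "\<forall>a\<in>J. c a = 0" "\<And>j. coeff z j \<in> J"
  shows "tensor_functional c e z = 0"
  unfolding tensor_functional_def using assms by simp

lemma coeff_ore_mult_in_right_ideal:
  assumes J: "0 \<in> J" "\<And>x y. x \<in> J \<Longrightarrow> y \<in> J \<Longrightarrow> x + y \<in> J" "\<And>x r. x \<in> J \<Longrightarrow> x * r \<in> J"
    and p: "\<And>i. coeff p i \<in> J"
  shows "coeff (p \<star> y) i \<in> J"
  using p
proof (induction p arbitrary: y i)
  case (pCons a p)
  have "a \<in> J" "\<And>i. coeff p i \<in> J" using pCons.prems[of 0] pCons.prems[of "Suc i" for i] by simp_all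
  then show ?case by (simp add: ore_mult_pCons_left J(2,3) pCons.IH)
qed (simp add: J(1))

lemma coeff_ore_mult_const_invariant:
  assumes "\<theta> b = b" "\<delta> b = 0"
  shows "coeff (u \<star> [:b:]) i = coeff u i * b"
proof (induction u arbitrary: i)
  case (pCons a u)
  have "tm [:b:] = pCons 0 [:b:]"
    by (rule poly_eqI) (simp add: coeff_tm coeff_pCons assms split: nat.splits)
  then have "pCons a u \<star> [:b:] = pCons (a * b) (u \<star> [:b:])"
    by (simp add: ore_mult_pCons_left ore_mult_pCons_0_right lsmult_pCons)
  then show ?case by (simp add: coeff_pCons pCons.IH split: nat.splits)
qed simp

lemma tensor_functional_central_multiple:
  assumes c: "A.linear_functional c" and e: "P.linear_functional e"
    and H: "central (embed_poly H)" "\<forall>q. e (q * H) = 0"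
  shows "tensor_functional c e (u \<star> (r \<star> embed_poly H) \<star> v) = 0"
proof -
  have "tensor_functional c e (w \<star> embed_poly H) = 0" for w
  proof -
    have "w \<star> embed_poly H = (\<Sum>j\<le>degree w. monom (coeff w j) j) \<star> embed_poly H"
      by (simp add: poly_as_sum_of_monoms)
    also have "\<dots> = (\<Sum>j\<le>degree w. ore_tensor (coeff w j) (monom 1 j * H))"
      by (simp only: ore_mult_sum_left ore_tensor_mult[symmetric] ore_tensor_monom)
    finally show ?thesis
      using H(2) by (simp add: R.functionals.linear_sum[OF tensor_functional_linear[OF c]]
          tensor_functional_ore_tensor[OF c e])
  qed
  moreover have "u \<star> (r \<star> embed_poly H) \<star> v = u \<star> r \<star> v \<star> embed_poly H"
    using H(1) unfolding central_def by (metis ore_mult_assoc)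
  ultimately show ?thesis by simp
qed

lemma tensor_functional_monomial_in_ideal:
  assumes J: "alg_ideal (*) (\<lambda>c a. \<iota> c * a) J" "\<forall>x\<in>J. c x = 0"
    and b: "\<theta> b = b" "\<delta> b = 0" "b \<in> J"
  shows "tensor_functional c e (u \<star> monom (b * s) j \<star> v) = 0"
proof -
  have J_closed: "0 \<in> J" "\<And>x y. x \<in> J \<Longrightarrow> y \<in> J \<Longrightarrow> x + y \<in> J" "\<And>x r. x \<in> J \<Longrightarrow> x * r \<in> J"
    using J(1) unfolding alg_ideal_def by blast+
  have "r * b \<in> J" for r using J(1) b(3) unfolding alg_ideal_def by blast
  then have "coeff (u \<star> [:b:]) i \<in> J" for u i by (simp add: coeff_ore_mult_const_invariant[OF b(1,2)])
  then have "coeff (u \<star> [:b:] \<star> monom s j \<star> v) i \<in> J" for i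
    by (intro coeff_ore_mult_in_right_ideal[OF J_closed coeff_ore_mult_in_right_ideal[OF J_closed]])
  moreover have "u \<star> monom (b * s) j \<star> v = u \<star> [:b:] \<star> monom s j \<star> v"
    by (simp add: ore_mult_const_left lsmult_monom ore_mult_assoc)
  ultimately show ?thesis using tensor_functional_vanishes[OF J(2)] by simp
qed

lemma monom_mult_in_span:
  assumes "y \<in> A.span E"
  shows "monom (y * s) j \<in> R.span ((\<lambda>f. monom (f * s) j) ` E)"
proof -
  let ?T = "{y. monom (y * s) j \<in> R.span ((\<lambda>f. monom (f * s) j) ` E)}"
  have "monom ((x + y) * s) j = monom (x * s) j + monom (y * s) j" for x y
    by (simp add: distrib_right add_monom)
  moreover have "monom ((\<iota> c * x) * s) j = ore_scal \<iota> c (monom (x * s) j)" for c x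
    by (simp add: ore_scal_eq_lsmult lsmult_monom mult.assoc)
  ultimately have "A.subspace ?T"
    unfolding A.subspace_def by (simp add: R.span_zero R.span_add R.span_scale)
  moreover have "E \<subseteq> ?T" by (auto intro: R.span_base)
  ultimately show ?thesis using A.span_minimal assms by blast
qed

lemma sum_monom_in_span:
  assumes "\<And>j s. s \<in> S \<Longrightarrow> y j s \<in> A.span E"
  shows "(\<Sum>j<D. \<Sum>s\<in>S. monom (y j s * s) j)
    \<in> R.span ((\<lambda>(j, s, f). monom (f * s) j) ` ({..<D} \<times> S \<times> E))"
proof (intro R.span_sum)
  fix j s assume js: "j \<in> {..<D}" "s \<in> S"
  have "(\<lambda>f. monom (f * s) j) ` E \<subseteq> (\<lambda>(j, s, f). monom (f * s) j) ` ({..<D} \<times> S \<times> E)"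
    using js by force
  moreover have "monom (y j s * s) j \<in> R.span ((\<lambda>f. monom (f * s) j) ` E)"
    by (rule monom_mult_in_span[OF assms[OF js(2)]])
  ultimately show "monom (y j s * s) j \<in> R.span ((\<lambda>(j, s, f). monom (f * s) j) ` ({..<D} \<times> S \<times> E))"
    using R.span_mono by blast
qed

lemma fin_codim_by_division:
  fixes K :: "'a poly set" and B J S E :: "'a set"
  assumes K: "R.subspace K"
    and H: "lead_coeff H = 1" and H_K: "\<And>r. r \<star> embed_poly H \<in> K"
    and S: "finite S" "\<And>a. \<exists>b. (\<forall>s\<in>S. b s \<in> B) \<and> a = (\<Sum>s\<in>S. b s * s)"
    and E: "finite E" "\<And>b. b \<in> B \<Longrightarrow> \<exists>y\<in>A.span E. b - y \<in> J"
    and monom_K: "\<And>b s j. b \<in> J \<Longrightarrow> monom (b * s) j \<in> K"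
  shows "fin_codim (ore_scal \<iota>) K"
proof -
  define F where "F = (\<lambda>(j, s, f). monom (f * s) j) ` ({..<degree H} \<times> S \<times> E)"
  have "\<exists>Y\<in>R.span F. x - Y \<in> K" for x
  proof -
    obtain r rem where x: "x = r \<star> embed_poly H + rem" and rem: "\<forall>j\<ge>degree H. coeff rem j = 0"
      using ore_division[OF H] by blast
    have "\<forall>j. \<exists>bj. (\<forall>s\<in>S. bj s \<in> B) \<and> coeff rem j = (\<Sum>s\<in>S. bj s * s)" using S(2) by blast
    from choice[OF this] obtain b
      where b: "\<forall>j. (\<forall>s\<in>S. b j s \<in> B) \<and> coeff rem j = (\<Sum>s\<in>S. b j s * s)"
      by blast
    have "\<forall>js. \<exists>y. snd js \<in> S \<longrightarrow> y \<in> A.span E \<and> b (fst js) (snd js) - y \<in> J"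
      using E(2) b by blast
    from choice[OF this] obtain y'
      where y': "\<forall>js. snd js \<in> S \<longrightarrow> y' js \<in> A.span E \<and> b (fst js) (snd js) - y' js \<in> J"
      by blast
    define y where "y j s = y' (j, s)" for j s
    have y: "y j s \<in> A.span E" "b j s - y j s \<in> J" if "s \<in> S" for j s
      using y'[rule_format, of "(j, s)"] that by (simp_all add: y_def)
    define Y where "Y = (\<Sum>j<degree H. \<Sum>s\<in>S. monom (y j s * s) j)"
    have Y_span: "Y \<in> R.span F"
      unfolding Y_def F_def by (rule sum_monom_in_span) (rule y(1))
    have x_Y: "x - Y = r \<star> embed_poly H + (\<Sum>j<degree H. \<Sum>s\<in>S. monom ((b j s - y j s) * s) j)"
    proof -
      have "rem = (\<Sum>j<degree H. monom (coeff rem j) j)"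
        by (rule poly_eq_sum_monom_lessThan[OF rem])
      also have "\<dots> = (\<Sum>j<degree H. \<Sum>s\<in>S. monom (b j s * s) j)"
        using b by (simp add: monom_sum)
      finally have rem_eq: "rem = (\<Sum>j<degree H. \<Sum>s\<in>S. monom (b j s * s) j)" .
      have "(\<Sum>j<degree H. \<Sum>s\<in>S. monom ((b j s - y j s) * s) j)
          = (\<Sum>j<degree H. \<Sum>s\<in>S. monom (b j s * s) j) - Y"
        unfolding Y_def by (simp add: left_diff_distrib diff_monom[symmetric] sum_subtractf)
      then show ?thesis unfolding x rem_eq by (simp only: add_diff_eq)
    qed
    have "x - Y \<in> K"
      unfolding x_Y by (intro R.subspace_add[OF K] H_K R.subspace_sum[OF K] monom_K y(2))
    with Y_span show ?thesis by (rule bexI[rotated])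
  qed
  moreover have "finite F" unfolding F_def using S(1) E(1) by simp
  ultimately show ?thesis unfolding R.fin_codim_iff_span by blast
qed

end

locale ore_extension_finite = ore_extension_periodic +
  assumes fin_left: "fin_gen_left {a. \<theta> a = a \<and> \<delta> a = 0}"
begin

lemma tensor_functional_in_dual:
  assumes c: "c \<in> A.fdual" and e: "e \<in> P.fdual"
  shows "tensor_functional c e \<in> R.fdual"
proof -
  define B where "B = {a. \<theta> a = a \<and> \<delta> a = 0}"
  define K where "K = {x. \<forall>u v. tensor_functional c e (u \<star> x \<star> v) = 0}"
  have c_lin: "A.linear_functional c" by (rule A.finite_dual_linear[OF c])
  have e_lin: "P.linear_functional e" by (rule P.finite_dual_linear[OF e])
  have \<Psi>_lin: "R.linear_functional (tensor_functional c e)" by (rule tensor_functional_linear[OF c_lin])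
  have K: "R.subspace K"
    unfolding K_def by (rule R.alg_ideal_subspace[OF R.alg_ideal_kernel[OF \<Psi>_lin]])
  obtain J G \<alpha> where J: "alg_ideal (*) (\<lambda>c a. \<iota> c * a) J" "\<forall>x\<in>J. c x = 0" "finite G"
    "\<And>g. g \<in> G \<Longrightarrow> A.linear_functional (\<alpha> g)" "\<And>x. x - (\<Sum>g\<in>G. \<iota> (\<alpha> g x) * g) \<in> J"
    "J = {x. \<forall>g\<in>G. \<alpha> g x = 0}"
    using A.finite_dual_kernels[OF c] by blast
  obtain m where m: "lead_coeff (pcompose m (monom 1 d)) = 1"
    "\<forall>q. e (q * pcompose m (monom 1 d)) = 0"
    using finite_dual_poly_annihilates_monic_pcompose[OF e d_pos] by blast
  define H where "H = pcompose m (monom 1 d)"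
  have H_K: "r \<star> embed_poly H \<in> K" for r
    using tensor_functional_central_multiple[OF c_lin e_lin central_embed_pcompose m(2), folded H_def]
    unfolding K_def by simp
  have monom_K: "monom (b * s) j \<in> K" if "b \<in> B \<inter> J" for b s j
  proof -
    have "\<theta> b = b" "\<delta> b = 0" "b \<in> J" using that by (auto simp: B_def)
    then show ?thesis
      unfolding K_def by (simp add: tensor_functional_monomial_in_ideal[OF J(1,2)])
  qed
  obtain S where S: "finite S" "\<forall>a. \<exists>b. (\<forall>s\<in>S. b s \<in> B) \<and> a = (\<Sum>s\<in>S. b s * s)"
    using fin_left unfolding fin_gen_left_def B_def by blast
  have B: "A.subspace B"
    unfolding A.subspace_def B_def by (simp add: theta_add delta_add theta_scalar delta_scalar)
  obtain E where E: "finite E" "E \<subseteq> B" "\<forall>x\<in>B. \<exists>y\<in>A.span E. \<forall>g\<in>G. \<alpha> g (x - y) = 0"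
    using A.kernels_finite_codim_in[of B G \<alpha>, OF B J(3) J(4)] by blast
  have E': "\<exists>y\<in>A.span E. b - y \<in> B \<inter> J" if "b \<in> B" for b
  proof -
    from bspec[OF E(3) that] obtain y where y: "y \<in> A.span E" "\<forall>g\<in>G. \<alpha> g (b - y) = 0" ..
    have "y \<in> B" using A.span_minimal[OF E(2) B] y(1) by blast
    with B that have "b - y \<in> B" by (rule A.subspace_diff)
    with y(2) have "b - y \<in> B \<inter> J" unfolding J(6) by simp
    with y(1) show ?thesis by (rule bexI[rotated])
  qed
  have "fin_codim (ore_scal \<iota>) K"
    by (rule fin_codim_by_division[OF K m(1)[folded H_def] H_K S(1) S(2)[rule_format] E(1) E' monom_K])
  then show ?thesis
    using R.finite_dual_if_kernel_fin_codim[OF \<Psi>_lin] unfolding K_def by blast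
qed

end

section \<open>The cotwisting map\<close>

context ore_extension
begin

text \<open>Dual to the multiplication k[t] \<otimes> A \<rightarrow> R, q \<otimes> a \<mapsto> q(t) a.\<close>

definition cotwist :: "('a \<times> 'k poly \<Rightarrow> 'k) \<Rightarrow> 'k poly \<times> 'a \<Rightarrow> 'k" where
  "cotwist T = (\<lambda>(q, a). inv_into R.fdual dual_tensor T (embed_poly q \<star> [:a:]))"

lemma cotwist_dual_tensor:
  "\<psi> \<in> R.fdual \<Longrightarrow> cotwist (dual_tensor \<psi>) = (\<lambda>(q, a). \<psi> (embed_poly q \<star> [:a:]))"
  unfolding cotwist_def by (simp add: inv_into_f_f[OF inj_on_dual_tensor])

lemma dual_tensor_add: "dual_tensor (\<lambda>x. \<psi>1 x + \<psi>2 x) = (\<lambda>z. dual_tensor \<psi>1 z + dual_tensor \<psi>2 z)"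
  by (auto simp: fun_eq_iff)

lemma dual_tensor_scale: "dual_tensor (\<lambda>x. c * \<psi> x) = (\<lambda>z. c * dual_tensor \<psi> z)"
  by (auto simp: fun_eq_iff)

lemma ore_tensor_mult_const_left: "ore_tensor (a * x) (y * p) = [:a:] \<star> ore_tensor x y \<star> embed_poly p"
proof -
  have "[:a:] \<star> ore_tensor x y = ore_tensor (a * x) y"
    by (simp add: poly_eq_iff ore_mult_const_left mult.assoc)
  then show ?thesis by (simp add: ore_tensor_mult)
qed

lemma delta_phi_dual_tensor_apply:
  assumes \<psi>: "\<psi> \<in> R.fdual"
  shows "delta_phi (*) (*) cotwist (dual_tensor \<psi>) ((a, q), (a', p))
    = \<psi> (ore_tensor a q \<star> ore_tensor a' p)"
proof -
  define \<psi>' where "\<psi>' r = \<psi> ([:a:] \<star> r \<star> embed_poly p)" for r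
  have \<psi>': "\<psi>' \<in> R.fdual" unfolding \<psi>'_def by (rule R.finite_dual_translate[OF \<psi>])
  have "(\<lambda>(x, y). dual_tensor \<psi> (a * x, y * p)) = dual_tensor \<psi>'"
    by (simp add: dual_tensor_def \<psi>'_def ore_tensor_mult_const_left case_prod_beta)
  then have "delta_phi (*) (*) cotwist (dual_tensor \<psi>) ((a, q), (a', p)) = \<psi>' (embed_poly q \<star> [:a':])"
    unfolding delta_phi_def by (simp add: cotwist_dual_tensor[OF \<psi>'])
  also have "\<dots> = \<psi> (ore_tensor a q \<star> ore_tensor a' p)"
    unfolding \<psi>'_def by (simp add: ore_tensor_eq ore_mult_assoc)
  finally show ?thesis .
qed

lemma delta_phi_dual_tensor:
  assumes "\<psi> \<in> R.fdual"
  shows "delta_phi (*) (*) cotwist (dual_tensor \<psi>)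
    = (\<lambda>(u, w). \<psi> (ore_tensor (fst u) (snd u) \<star> ore_tensor (fst w) (snd w)))"
proof
  fix z :: "('a \<times> 'k poly) \<times> ('a \<times> 'k poly)"
  obtain a q a' p where z: "z = ((a, q), (a', p))" by (metis surj_pair)
  show "delta_phi (*) (*) cotwist (dual_tensor \<psi>) z
      = (\<lambda>(u, w). \<psi> (ore_tensor (fst u) (snd u) \<star> ore_tensor (fst w) (snd w))) z"
    unfolding z by (simp only: delta_phi_dual_tensor_apply[OF assms] case_prod_conv fst_conv snd_conv)
qed

end

context ore_extension_finite
begin

lemma dual_tensor_surj:
  assumes "T \<in> tensor_span A.fdual P.fdual"
  shows "\<exists>\<psi>\<in>R.fdual. dual_tensor \<psi> = T"
proof -
  obtain n :: nat and c e where ce: "\<forall>i<n. c i \<in> A.fdual \<and> e i \<in> P.fdual"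
    "T = (\<lambda>(x, y). \<Sum>i<n. c i x * e i y)"
    using assms unfolding tensor_span_def by blast
  define \<psi> where "\<psi> x = (\<Sum>i<n. tensor_functional (c i) (e i) x)" for x
  have "\<psi> \<in> R.fdual"
    unfolding \<psi>_def by (rule R.finite_dual_sum) (use ce(1) tensor_functional_in_dual in auto)
  moreover have "dual_tensor \<psi> = T"
  proof
    fix z
    have "dual_tensor \<psi> z = (\<Sum>i<n. dual_tensor (tensor_functional (c i) (e i)) z)"
      by (simp add: \<psi>_def dual_tensor_def case_prod_beta)
    also have "\<dots> = T z"
      using ce dual_tensor_tensor_functional by (simp add: case_prod_beta)
    finally show "dual_tensor \<psi> z = T z" .
  qed
  ultimately show ?thesis by blast
qed

lemma bij_betw_dual_tensor: "bij_betw dual_tensor R.fdual (tensor_span A.fdual P.fdual)"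
  unfolding bij_betw_def
  using inj_on_dual_tensor dual_tensor_in_tensor_span dual_tensor_surj by blast

lemma cotwist_linear_on: "linear_on (tensor_span A.fdual P.fdual) cotwist"
  unfolding linear_on_def
proof (intro conjI ballI allI)
  fix T1 T2 assume "T1 \<in> tensor_span A.fdual P.fdual" "T2 \<in> tensor_span A.fdual P.fdual"
  then obtain \<psi>1 \<psi>2 where \<psi>: "\<psi>1 \<in> R.fdual" "\<psi>2 \<in> R.fdual" "T1 = dual_tensor \<psi>1" "T2 = dual_tensor \<psi>2"
    using dual_tensor_surj by metis
  have "(\<lambda>x. \<psi>1 x + \<psi>2 x) \<in> R.fdual" by (rule R.finite_dual_add[OF \<psi>(1,2)])
  then show "cotwist (\<lambda>z. T1 z + T2 z) = (\<lambda>z. cotwist T1 z + cotwist T2 z)"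
    unfolding \<psi>(3,4) dual_tensor_add[symmetric]
    by (auto simp: cotwist_dual_tensor \<psi>(1,2) fun_eq_iff)
next
  fix T c assume "T \<in> tensor_span A.fdual P.fdual"
  then obtain \<psi> where \<psi>: "\<psi> \<in> R.fdual" "T = dual_tensor \<psi>" using dual_tensor_surj by metis
  have "(\<lambda>x. c * \<psi> x) \<in> R.fdual" by (rule R.finite_dual_scale[OF \<psi>(1)])
  then show "cotwist (\<lambda>z. c * T z) = (\<lambda>z. c * cotwist T z)"
    unfolding \<psi>(2) dual_tensor_scale[symmetric]
    by (auto simp: cotwist_dual_tensor \<psi>(1) fun_eq_iff)
qed

lemma cotwist_image: "cotwist ` tensor_span A.fdual P.fdual \<subseteq> tensor_span P.fdual A.fdual"
proof
  fix T' assume "T' \<in> cotwist ` tensor_span A.fdual P.fdual"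
  then obtain \<psi> where \<psi>: "\<psi> \<in> R.fdual" "T' = cotwist (dual_tensor \<psi>)"
    using dual_tensor_surj by blast
  obtain n :: nat and u v where uv: "\<forall>i<n. u i \<in> R.fdual \<and> v i \<in> R.fdual"
    "\<forall>x y. \<psi> (x \<star> y) = (\<Sum>i<n. u i x * v i y)"
    using R.finite_dual_mult_finite_rank[OF \<psi>(1)] by blast
  have "T' = (\<lambda>(q, a). \<Sum>i<n. u i (embed_poly q) * v i [:a:])"
    unfolding \<psi>(2) cotwist_dual_tensor[OF \<psi>(1)] by (simp add: uv(2))
  also have "\<dots> \<in> tensor_span P.fdual A.fdual"
    using uv(1) finite_dual_comp_const finite_dual_comp_embed_poly
    by (intro tensor_span_intro[of n "\<lambda>i q. u i (embed_poly q)" _ "\<lambda>i a. v i [:a:]"]) blast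
  finally show "T' \<in> tensor_span P.fdual A.fdual" .
qed

lemma delta_phi_cotwist_in_tensor_span:
  assumes "\<psi> \<in> R.fdual"
  shows "delta_phi (*) (*) cotwist (dual_tensor \<psi>)
    \<in> tensor_span (tensor_span A.fdual P.fdual) (tensor_span A.fdual P.fdual)"
proof -
  obtain n :: nat and u v where uv: "\<forall>i<n. u i \<in> R.fdual \<and> v i \<in> R.fdual"
    "\<forall>x y. \<psi> (x \<star> y) = (\<Sum>i<n. u i x * v i y)"
    using R.finite_dual_mult_finite_rank[OF assms] by blast
  have "delta_phi (*) (*) cotwist (dual_tensor \<psi>) = (\<lambda>(x, y). \<Sum>i<n. dual_tensor (u i) x * dual_tensor (v i) y)"
    unfolding delta_phi_dual_tensor[OF assms] by (simp add: uv(2) dual_tensor_def case_prod_beta)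
  also have "\<dots> \<in> tensor_span (tensor_span A.fdual P.fdual) (tensor_span A.fdual P.fdual)"
    using uv(1) dual_tensor_in_tensor_span
    by (intro tensor_span_intro[of n "\<lambda>i. dual_tensor (u i)" _ "\<lambda>i. dual_tensor (v i)"]) blast
  finally show ?thesis .
qed

lemma delta_phi_cotwist_coassoc:
  assumes \<psi>: "\<psi> \<in> R.fdual"
  shows "delta_phi (*) (*) cotwist (\<lambda>z. delta_phi (*) (*) cotwist (dual_tensor \<psi>) (z, w)) (u, v)
    = delta_phi (*) (*) cotwist (\<lambda>z. delta_phi (*) (*) cotwist (dual_tensor \<psi>) (u, z)) (v, w)"
proof -
  define \<psi>w where "\<psi>w r = \<psi> ([:1:] \<star> r \<star> ore_tensor (fst w) (snd w))" for r
  define \<psi>u where "\<psi>u r = \<psi> (ore_tensor (fst u) (snd u) \<star> r \<star> [:1:])" for r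
  have "\<psi>w \<in> R.fdual" "\<psi>u \<in> R.fdual"
    unfolding \<psi>w_def \<psi>u_def by (rule R.finite_dual_translate[OF \<psi>])+
  moreover have "(\<lambda>z. delta_phi (*) (*) cotwist (dual_tensor \<psi>) (z, w)) = dual_tensor \<psi>w"
    "(\<lambda>z. delta_phi (*) (*) cotwist (dual_tensor \<psi>) (u, z)) = dual_tensor \<psi>u"
    unfolding delta_phi_dual_tensor[OF \<psi>] \<psi>w_def \<psi>u_def by (auto simp: fun_eq_iff)
  ultimately show ?thesis
    by (simp add: delta_phi_dual_tensor \<psi>w_def \<psi>u_def ore_mult_assoc case_prod_beta)
qed

lemma cotwisting_cotwist: "cotwisting A.fdual P.fdual (*) 1 (*) 1 cotwist"
  unfolding cotwisting_def
proof (intro conjI ballI allI)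
  show "linear_on (tensor_span A.fdual P.fdual) cotwist" by (rule cotwist_linear_on)
  show "cotwist ` tensor_span A.fdual P.fdual \<subseteq> tensor_span P.fdual A.fdual" by (rule cotwist_image)
next
  fix T assume "T \<in> tensor_span A.fdual P.fdual"
  then obtain \<psi> where \<psi>: "\<psi> \<in> R.fdual" and T: "T = dual_tensor \<psi>" using dual_tensor_surj by metis
  show "delta_phi (*) (*) cotwist T \<in> tensor_span (tensor_span A.fdual P.fdual) (tensor_span A.fdual P.fdual)"
    unfolding T by (rule delta_phi_cotwist_in_tensor_span[OF \<psi>])
  fix u v w
  show "delta_phi (*) (*) cotwist (\<lambda>z. delta_phi (*) (*) cotwist T (z, w)) (u, v)
      = delta_phi (*) (*) cotwist (\<lambda>z. delta_phi (*) (*) cotwist T (u, z)) (v, w)"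
    unfolding T by (rule delta_phi_cotwist_coassoc[OF \<psi>])
  show "delta_phi (*) (*) cotwist T ((1, 1), w) = T w" "delta_phi (*) (*) cotwist T (u, (1, 1)) = T u"
    unfolding T delta_phi_dual_tensor[OF \<psi>] by (simp_all add: ore_tensor_1_1 dual_tensor_def case_prod_beta)
qed

lemma coalg_iso_dual_tensor:
  "coalg_iso_twisted R.fdual (\<star>) [:1:] A.fdual P.fdual (*) 1 (*) 1 cotwist dual_tensor"
  unfolding coalg_iso_twisted_def
proof (intro conjI ballI)
  show "bij_betw dual_tensor R.fdual (tensor_span A.fdual P.fdual)" by (rule bij_betw_dual_tensor)
  show "linear_on R.fdual dual_tensor" by (simp add: linear_on_def dual_tensor_add dual_tensor_scale)
  fix \<psi> assume \<psi>: "\<psi> \<in> R.fdual"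
  show "dual_tensor \<psi> (1, 1) = \<psi> [:1:]" by (simp add: ore_tensor_1_1)
  show "delta_phi (*) (*) cotwist (dual_tensor \<psi>) = tensor_map dual_tensor dual_tensor (\<lambda>(x, y). \<psi> (x \<star> y))"
    unfolding delta_phi_dual_tensor[OF \<psi>] tensor_map_def by (auto simp: fun_eq_iff)
qed

end

theorem corollary4p3:
  fixes \<iota> :: "'k::field \<Rightarrow> 'a::ring_1" and \<theta> \<delta> :: "'a \<Rightarrow> 'a" and d :: nat
  assumes alg: "k_algebra \<iota>"
    and theta_lin: "k_linear \<iota> \<theta>" and theta_bij: "bij \<theta>"
    and theta_mult: "\<forall>a b. \<theta> (a * b) = \<theta> a * \<theta> b" and theta_one: "\<theta> 1 = 1"
    and delta_lin: "k_linear \<iota> \<delta>"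
    and delta_der: "\<forall>a b. \<delta> (a * b) = \<theta> a * \<delta> b + \<delta> a * b"
    and d_pos: "0 < d" and theta_d: "\<theta> ^^ d = id"
    and words_zero: "\<forall>i<d. \<forall>a. (\<Sum>w\<in>words i d. word_op \<theta> \<delta> w a) = 0"
    and fin_left: "fin_gen_left {a. \<theta> a = a \<and> \<delta> a = 0}"
    and fin_right: "fin_gen_right {a. \<theta> a = a \<and> \<delta> a = 0}"
  shows "\<exists>(\<phi> :: ('a \<times> 'k poly \<Rightarrow> 'k) \<Rightarrow> ('k poly \<times> 'a \<Rightarrow> 'k))
            (f :: ('a poly \<Rightarrow> 'k) \<Rightarrow> ('a \<times> 'k poly \<Rightarrow> 'k)).
     cotwisting (finite_dual (*) (\<lambda>c a. \<iota> c * a)) (finite_dual (*) smult) (*) 1 (*) 1 \<phi>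
   \<and> coalg_iso_twisted (finite_dual (ore_mult \<theta> \<delta>) (ore_scal \<iota>)) (ore_mult \<theta> \<delta>) [:1:]
        (finite_dual (*) (\<lambda>c a. \<iota> c * a)) (finite_dual (*) smult) (*) 1 (*) 1 \<phi> f"
proof -
  interpret ore_extension_finite \<iota> \<theta> \<delta> d
    by unfold_locales (fact assms)+
  show ?thesis using cotwisting_cotwist coalg_iso_dual_tensor by blast
qed

end
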